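(* Let $\chi$ be a universal constant with the following property: for every SBM on $[n]$ with communities $S_1,\dots,S_k$ and edge probabilities $a/n>b/n$, with $L_{ij}=1$ for $i,j$ in the same community and $L_{ij}=-1$ otherwise, with probability at least $1-2/n^2$ there is $S\subseteq[n]$ with $|S|\ge(1-e^{-2C})n$ and $\|(A-\frac{a+b}{2n}J-\frac{a-b}{2n}L)_{S\times S}\|_{\mathrm{op}}\le\chi\sqrt{a+b}$. Now let $A$ be the adjacency matrix of an $\varepsilon$-corrupted semi-random SBM with edge parameters $b<a$ and communities $S_1,\dots,S_k$ partitioning $[n]$, and let $C=(\sqrt a-\sqrt b)^2$. Then with probability at least $1-2/n^2$, every optimal solution $W$ of the Initialization SDP (with inputs $A,a,b,\chi$) satisfies: (1) $\sum W_{ij}$ over pairs $(i,j)$ with $i,j$ in different communities is at most $(5\chi/\sqrt C+2\varepsilon)n^2$; (2) $\sum W_{ij}$ over pairs $(i,j)$ with $i,j$ in the same community is at least $\sum_{i=1}^k|S_i|^2-(6\chi/\sqrt C+4\varepsilon)n^2$.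
   Context: $\varepsilon$-corrupted semi-random SBM: there is an unknown partition of $[n]$ into communities $S_1,\dots,S_k$. A graph $A_0$ is sampled with all pairs independent, same-community pairs joined with probability $a/n$ and different-community pairs with probability $b/n$ (symmetric adjacency matrix, zero diagonal). An adversary then (i) arbitrarily adds edges within communities and removes edges between communities, and (ii) picks up to $\varepsilon n$ vertices and arbitrarily modifies their incident edges; $A$ is the resulting adjacency matrix. Initialization SDP: given $A,a,b,\chi$, find $n\times n$ real matrices $W,F$ with $0\le W_{ij},F_{ij}\le1$ for all $i,j$, $\|W\|_1\le n$ (trace norm, i.e. sum of singular values), and $-\chi\sqrt{a+b}\,I\preceq(A-(a/n)J-F)\odot W\preceq\chi\sqrt{a+b}\,I$ (where $X\preceq Y$ means $Y-X$ is symmetric positive semidefinite), maximizing $\sum_{i,j}W_{ij}$. $J$ is the all-ones matrix and $\odot$ the entrywise product. *)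

theory Defs
  imports "HOL-Probability.Probability" "Jordan_Normal_Form.Char_Poly"
begin

text \<open>Matrices are functions nat => nat => real; only indices below n matter.\<close>

definition is_partition :: "nat \<Rightarrow> nat \<Rightarrow> (nat \<Rightarrow> nat set) \<Rightarrow> bool" where
  "is_partition n k S \<longleftrightarrow>
     (\<Union>l<k. S l) = {..<n} \<and> (\<forall>l<k. \<forall>m<k. l \<noteq> m \<longrightarrow> S l \<inter> S m = {})"

definition same_comm :: "nat \<Rightarrow> (nat \<Rightarrow> nat set) \<Rightarrow> nat \<Rightarrow> nat \<Rightarrow> bool" where
  "same_comm k S i j \<longleftrightarrow> (\<exists>l<k. i \<in> S l \<and> j \<in> S l)"

text \<open>The SBM: independent edges on pairs i<j<n; the resulting adjacency matrix is
  symmetric with zero diagonal (and zero outside [n]).\<close>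
definition edge_adj :: "(nat \<times> nat \<Rightarrow> bool) \<Rightarrow> nat \<Rightarrow> nat \<Rightarrow> real" where
  "edge_adj e i j = (if e (i, j) \<or> e (j, i) then 1 else 0)"

definition sbm :: "nat \<Rightarrow> nat \<Rightarrow> (nat \<Rightarrow> nat set) \<Rightarrow> real \<Rightarrow> real \<Rightarrow> (nat \<Rightarrow> nat \<Rightarrow> real) pmf" where
  "sbm n k S a b = map_pmf edge_adj
     (Pi_pmf {(i, j). i < j \<and> j < n} False
        (\<lambda>(i, j). bernoulli_pmf (if same_comm k S i j then a / real n else b / real n)))"

definition adjacency :: "nat \<Rightarrow> (nat \<Rightarrow> nat \<Rightarrow> real) \<Rightarrow> bool" where
  "adjacency n A \<longleftrightarrow> (\<forall>i j. A i j \<in> {0, 1} \<and> A i j = A j i \<and> A i i = 0 \<and>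
                              (i \<ge> n \<or> j \<ge> n \<longrightarrow> A i j = 0))"

text \<open>A is obtainable from A0 by the semi-random monotone adversary (step (i), giving A1)
  followed by arbitrary modification of the edges incident to at most eps*n vertices B.\<close>
definition admissible ::
  "nat \<Rightarrow> nat \<Rightarrow> (nat \<Rightarrow> nat set) \<Rightarrow> real \<Rightarrow> (nat \<Rightarrow> nat \<Rightarrow> real) \<Rightarrow> (nat \<Rightarrow> nat \<Rightarrow> real) \<Rightarrow> bool" where
  "admissible n k S eps A0 A \<longleftrightarrow>
     adjacency n A \<and>
     (\<exists>A1 B. adjacency n A1 \<and>
        (\<forall>i<n. \<forall>j<n. (same_comm k S i j \<longrightarrow> A1 i j \<ge> A0 i j) \<and>
                      (\<not> same_comm k S i j \<longrightarrow> A1 i j \<le> A0 i j)) \<and>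
        B \<subseteq> {..<n} \<and> real (card B) \<le> eps * real n \<and>
        (\<forall>i<n. \<forall>j<n. i \<notin> B \<and> j \<notin> B \<longrightarrow> A i j = A1 i j))"

definition to_mat :: "nat \<Rightarrow> (nat \<Rightarrow> nat \<Rightarrow> real) \<Rightarrow> real mat" where
  "to_mat n M = mat n n (\<lambda>(i, j). M i j)"

text \<open>Trace norm = sum of singular values, i.e. of the square roots of the eigenvalues
  (with algebraic multiplicity) of M^T M.\<close>
definition trace_norm :: "nat \<Rightarrow> (nat \<Rightarrow> nat \<Rightarrow> real) \<Rightarrow> real" where
  "trace_norm n M =
     (let p = char_poly (transpose_mat (to_mat n M) * to_mat n M)
      in \<Sum>r\<in>{r. poly p r = 0}. sqrt r * real (order r p))"

definition psd :: "nat \<Rightarrow> (nat \<Rightarrow> nat \<Rightarrow> real) \<Rightarrow> bool" where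
  "psd n M \<longleftrightarrow> (\<forall>i<n. \<forall>j<n. M i j = M j i) \<and>
               (\<forall>x :: nat \<Rightarrow> real. (\<Sum>i<n. \<Sum>j<n. x i * M i j * x j) \<ge> 0)"

definition opnorm_on :: "nat set \<Rightarrow> (nat \<Rightarrow> nat \<Rightarrow> real) \<Rightarrow> real" where
  "opnorm_on T M = Sup {sqrt (\<Sum>i\<in>T. (\<Sum>j\<in>T. M i j * x j)\<^sup>2) | x. (\<Sum>j\<in>T. (x j)\<^sup>2) \<le> 1}"

definition sdp_feasible ::
  "nat \<Rightarrow> (nat \<Rightarrow> nat \<Rightarrow> real) \<Rightarrow> real \<Rightarrow> real \<Rightarrow> real \<Rightarrow> (nat \<Rightarrow> nat \<Rightarrow> real) \<Rightarrow> (nat \<Rightarrow> nat \<Rightarrow> real) \<Rightarrow> bool" where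
  "sdp_feasible n A a b chi W F \<longleftrightarrow>
     (\<forall>i<n. \<forall>j<n. 0 \<le> W i j \<and> W i j \<le> 1 \<and> 0 \<le> F i j \<and> F i j \<le> 1) \<and>
     trace_norm n W \<le> real n \<and>
     (let X = (\<lambda>i j. (A i j - a / real n - F i j) * W i j);
          c = chi * sqrt (a + b)
      in psd n (\<lambda>i j. X i j + (if i = j then c else 0)) \<and>
         psd n (\<lambda>i j. (if i = j then c else 0) - X i j))"

definition sdp_obj :: "nat \<Rightarrow> (nat \<Rightarrow> nat \<Rightarrow> real) \<Rightarrow> real" where
  "sdp_obj n W = (\<Sum>i<n. \<Sum>j<n. W i j)"

definition sdp_optimal ::
  "nat \<Rightarrow> (nat \<Rightarrow> nat \<Rightarrow> real) \<Rightarrow> real \<Rightarrow> real \<Rightarrow> real \<Rightarrow> (nat \<Rightarrow> nat \<Rightarrow> real) \<Rightarrow> (nat \<Rightarrow> nat \<Rightarrow> real) \<Rightarrow> bool" where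
  "sdp_optimal n A a b chi W F \<longleftrightarrow>
     sdp_feasible n A a b chi W F \<and>
     (\<forall>W' F'. sdp_feasible n A a b chi W' F' \<longrightarrow> sdp_obj n W' \<le> sdp_obj n W)"

definition chi_property :: "real \<Rightarrow> bool" where
  "chi_property chi \<longleftrightarrow>
     (\<forall>n k S a b. is_partition n k S \<and> 0 \<le> b \<and> b < a \<and> a \<le> real n \<longrightarrow>
        (let C = (sqrt a - sqrt b)\<^sup>2;
             L = (\<lambda>i j. if same_comm k S i j then 1 else -1 :: real)
         in measure_pmf.prob (sbm n k S a b)
              {A0. \<exists>T \<subseteq> {..<n}. real (card T) \<ge> (1 - exp (-2 * C)) * real n \<and>
                   opnorm_on T (\<lambda>i j. A0 i j - (a + b) / (2 * real n)
                                    - (a - b) / (2 * real n) * L i j) \<le> chi * sqrt (a + b)}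
            \<ge> 1 - 2 / (real n)\<^sup>2))"

end

theory Submission
  imports Defs
begin

text \<open>
  Let T be the vertex set provided by the spectral property of \<chi> and B the set of corrupted
  vertices. The planted solution, W* the indicator of same-community pairs inside T - B and
  F* = A1 - A0 there, is feasible: on its support the residual (A - a/n - F*) \<odot> W* is the centred
  noise A0 - E A0, whose restriction to every community block of T has operator norm at most
  \<chi>\<surd>(a+b). Hence every optimal W has objective at least \<Sum>|S_l|^2 minus the at most
  2n^2 (exp(-2C) + \<epsilon>) pairs not inside T - B. On cross-community pairs inside T - B the monotone
  adversary only deletes edges, so the two-sided spectral constraint and the trace duality
  \<langle>N, W\<rangle> \<le> \<parallel>N\<parallel> \<parallel>W\<parallel>_* \<le> \<parallel>N\<parallel> n bound (a-b)/n times their W-mass by 4\<chi>\<surd>(a+b) n.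
  Finally a - b \<ge> \<surd>C \<surd>(a+b), and 2 exp(-2C) \<le> \<chi>/\<surd>C because the spectral property
  already forces \<chi> \<ge> 1/\<surd>2.
\<close>

no_notation Finite_Cartesian_Product.vec.vec_nth (infixl "$" 90)

section \<open>Orthogonal diagonalization of real symmetric matrices\<close>

lemma index_mult_mat_sum:
  assumes "A \<in> carrier_mat n m" "B \<in> carrier_mat m p" "i < n" "j < p"
  shows "(A * B) $$ (i,j) = (\<Sum>k<m. A $$ (i,k) * B $$ (k,j))"
  using assms by (simp add: scalar_prod_def atLeast0LessThan Matrix.row_def Matrix.col_def)

definition diag_matrix :: "nat \<Rightarrow> (nat \<Rightarrow> real) \<Rightarrow> real mat" where
  "diag_matrix n d = mat n n (\<lambda>(i,j). if i = j then d i else 0)"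

lemma diag_matrix_carrier[simp]: "diag_matrix n d \<in> carrier_mat n n"
  by (simp add: diag_matrix_def)

lemma complex_eigenpair_exists:
  fixes P :: "nat \<Rightarrow> nat \<Rightarrow> real"
  assumes n: "0 < n"
  shows "\<exists>lam z. (\<exists>i<n. z i \<noteq> 0) \<and> (\<forall>i<n. (\<Sum>j<n. complex_of_real (P i j) * z j) = lam * z i)"
proof -
  define PC :: "complex mat" where "PC = mat n n (\<lambda>(i,j). complex_of_real (P i j))"
  have PC: "PC \<in> carrier_mat n n" by (simp add: PC_def)
  obtain es where cp: "char_poly PC = (\<Prod>e\<leftarrow>es. [:-e,1:])" and len: "length es = n"
    using char_poly_factorized[OF PC] by blast
  have "poly (char_poly PC) (es ! 0) = 0"
    unfolding cp using len n by (intro linear_poly_root nth_mem) simp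
  hence "eigenvalue PC (es ! 0)" using eigenvalue_root_char_poly[OF PC] by simp
  then obtain z where "eigenvector PC z (es ! 0)" using find_eigenvector[OF PC] by blast
  hence zc: "z \<in> carrier_vec n" and z0: "z \<noteq> 0\<^sub>v n" and eq: "PC *\<^sub>v z = es ! 0 \<cdot>\<^sub>v z"
    unfolding eigenvector_def using PC by auto
  obtain i0 where "i0 < n" "z $ i0 \<noteq> 0"
    using z0 zc by (metis eq_vecI carrier_vecD index_zero_vec)
  moreover have "(\<Sum>j<n. complex_of_real (P i j) * z $ j) = es ! 0 * z $ i" if "i < n" for i
  proof -
    have "(PC *\<^sub>v z) $ i = (\<Sum>j<n. complex_of_real (P i j) * z $ j)"
      using that zc PC unfolding PC_def
      by (simp add: scalar_prod_def Matrix.row_def atLeast0LessThan)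
    thus ?thesis using eq that zc by simp
  qed
  ultimately show ?thesis by blast
qed

lemma eigenvalue_real_of_symmetric:
  fixes P :: "nat \<Rightarrow> nat \<Rightarrow> real"
  assumes sym: "\<And>i j. i < n \<Longrightarrow> j < n \<Longrightarrow> P i j = P j i"
    and i0: "i0 < n" "z i0 \<noteq> 0"
    and eig: "\<And>i. i < n \<Longrightarrow> (\<Sum>j<n. complex_of_real (P i j) * z j) = lam * z i"
  shows "Im lam = 0"
proof -
  define s where "s = (\<Sum>i<n. cnj (z i) * (\<Sum>j<n. complex_of_real (P i j) * z j))"
  define r where "r = (\<Sum>i<n. (cmod (z i))^2)"
  have s_eq: "s = lam * of_real r"
  proof -
    have "s = (\<Sum>i<n. lam * (cnj (z i) * z i))" unfolding s_def
      by (rule sum.cong, simp, simp add: eig)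
    also have "\<dots> = lam * of_real r" unfolding r_def of_real_sum complex_norm_square
      by (simp add: sum_distrib_left mult_ac)
    finally show ?thesis .
  qed
  have "cnj s = s"
  proof -
    have "cnj s = (\<Sum>i<n. \<Sum>j<n. z i * (complex_of_real (P i j) * cnj (z j)))"
      unfolding s_def by (simp add: sum_distrib_left)
    also have "\<dots> = (\<Sum>j<n. \<Sum>i<n. z i * (complex_of_real (P i j) * cnj (z j)))"
      by (rule sum.swap)
    also have "\<dots> = s" unfolding s_def sum_distrib_left
      by (intro sum.cong refl, simp add: sym mult_ac)
    finally show ?thesis .
  qed
  hence "Im s = 0" by (metis complex_cnj_cancel_iff complex_is_Real_iff Reals_cnj_iff)
  moreover have "r > 0" unfolding r_def
    by (rule sum_pos2[of _ i0]) (use i0 in auto)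
  ultimately show ?thesis unfolding s_eq by simp
qed

lemma symmetric_real_eigenvector:
  fixes P :: "nat \<Rightarrow> nat \<Rightarrow> real"
  assumes n: "0 < n" and sym: "\<And>i j. i < n \<Longrightarrow> j < n \<Longrightarrow> P i j = P j i"
  shows "\<exists>\<mu> v. (\<Sum>i<n. (v i)^2) = 1 \<and> (\<forall>i<n. (\<Sum>j<n. P i j * v j) = \<mu> * v i)"
proof -
  obtain lam z i0 where i0: "i0 < n" "z i0 \<noteq> 0"
    and eig: "\<And>i. i < n \<Longrightarrow> (\<Sum>j<n. complex_of_real (P i j) * z j) = lam * z i"
    using complex_eigenpair_exists[OF n, of P] by blast
  define \<mu> where "\<mu> = Re lam"
  have lam: "lam = complex_of_real \<mu>"
    using eigenvalue_real_of_symmetric[OF sym i0 eig] by (simp add: \<mu>_def complex_eq_iff)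
  have re: "(\<Sum>j<n. P i j * Re (z j)) = \<mu> * Re (z i)" if "i < n" for i
    using arg_cong[OF eig[OF that], of Re] by (simp add: lam Re_sum)
  have im: "(\<Sum>j<n. P i j * Im (z j)) = \<mu> * Im (z i)" if "i < n" for i
    using arg_cong[OF eig[OF that], of Im] by (simp add: lam Im_sum)
  obtain w where w: "\<And>i. i < n \<Longrightarrow> (\<Sum>j<n. P i j * w j) = \<mu> * w i" and wi: "w i0 \<noteq> 0"
  proof (cases "Re (z i0) = 0")
    case True
    hence "Im (z i0) \<noteq> 0" using i0 complex_eq_iff by force
    thus ?thesis using that[of "\<lambda>j. Im (z j)"] im by blast
  next
    case False
    thus ?thesis using that[of "\<lambda>j. Re (z j)"] re by blast
  qed
  define q where "q = (\<Sum>i<n. (w i)^2)"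
  have q: "q > 0" unfolding q_def by (rule sum_pos2[of _ i0]) (use i0 wi in auto)
  define v where "v = (\<lambda>i. w i / sqrt q)"
  have "(\<Sum>i<n. (v i)^2) = 1" unfolding v_def using q
    by (simp add: power_divide sum_divide_distrib[symmetric] q_def[symmetric])
  moreover have "\<forall>i<n. (\<Sum>j<n. P i j * v j) = \<mu> * v i"
    unfolding v_def using w by (simp add: sum_divide_distrib[symmetric])
  ultimately show ?thesis by blast
qed
lemma reflection_mat_involution:
  fixes u :: "nat \<Rightarrow> real"
  assumes c0: "c \<noteq> 0" and uu: "(\<Sum>k<n. u k * u k) = 2 * c"
  shows "mat n n (\<lambda>(i,j). (if i = j then 1 else 0) - u i * u j / c)
         * mat n n (\<lambda>(i,j). (if i = j then 1 else 0) - u i * u j / c) = 1\<^sub>m n"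
    (is "?H * ?H = _")
proof (rule eq_matI)
  fix i j assume i: "i < dim_row (1\<^sub>m n)" and j: "j < dim_col (1\<^sub>m n)"
  hence i: "i<n" and j: "j<n" by auto
  have "(?H * ?H) $$ (i,j) = (\<Sum>k<n. ((if i = k then 1 else 0) - u i * u k / c) * ((if k = j then 1 else 0) - u k * u j / c))"
    using i j by (simp add: scalar_prod_def atLeast0LessThan Matrix.row_def Matrix.col_def)
  also have "\<dots> = (\<Sum>k<n. (if i = k then 1 else 0) * (if k = j then 1 else 0))
      - (\<Sum>k<n. (if i = k then 1 else 0) * (u k * u j / c))
      - (\<Sum>k<n. (u i * u k / c) * (if k = j then 1 else 0))
      + (\<Sum>k<n. (u i * u k / c) * (u k * u j / c))"
    by (simp add: sum.distrib[symmetric] sum_subtractf[symmetric] algebra_simps)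
  also have "\<dots> = (if i = j then 1 else 0) - u i * u j / c - u i * u j / c
      + u i * u j * (\<Sum>k<n. u k * u k) / (c * c)"
  proof -
    have s1: "(\<Sum>k<n. (if i = k then 1 else 0) * (if k = j then 1 else 0)) = (if i = j then 1 else (0::real))"
      using i by (simp add: if_distrib[of "\<lambda>x. x * _"] cong: if_cong)
    have s2: "(\<Sum>k<n. (if i = k then 1 else 0) * (u k * u j / c)) = u i * u j / c"
      using i by (simp add: if_distrib[of "\<lambda>x. x * _"] sum_divide_distrib[symmetric] cong: if_cong)
    have s3: "(\<Sum>k<n. (u i * u k / c) * (if k = j then 1 else 0)) = u i * u j / c"
      using j by (simp add: if_distrib[of "\<lambda>x. _ * x"] sum_divide_distrib[symmetric] cong: if_cong)
    have s4: "(\<Sum>k<n. (u i * u k / c) * (u k * u j / c)) = u i * u j * (\<Sum>k<n. u k * u k) / (c * c)"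
      by (simp add: sum_distrib_left sum_divide_distrib mult_ac)
    show ?thesis using s1 s2 s3 s4 by simp
  qed
  also have "\<dots> = (if i = j then 1 else 0)" using i j c0 unfolding uu
    by (simp add: field_simps power2_eq_square)
  finally show "(?H * ?H) $$ (i,j) = 1\<^sub>m n $$ (i,j)" using i j by simp
qed auto

lemma householder_reflection_exists:
  fixes v :: "nat \<Rightarrow> real"
  assumes n: "0 < n" and unit: "(\<Sum>i<n. (v i)^2) = 1"
  shows "\<exists>H. H \<in> carrier_mat n n \<and> transpose_mat H = H \<and> H * H = 1\<^sub>m n \<and> (\<forall>i<n. H $$ (i,0) = v i)"
proof (cases "v 0 = 1")
  case True
  have "(\<Sum>i<n. (v i)^2) = (v 0)^2 + (\<Sum>i\<in>{..<n}-{0}. (v i)^2)"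
    using n by (simp add: sum.remove[of "{..<n}" 0])
  hence z: "(\<Sum>i\<in>{..<n}-{0}. (v i)^2) = 0" using unit True by simp
  have "\<forall>i\<in>{..<n}-{0}. (v i)^2 = 0"
    using sum_nonneg_eq_0_iff[THEN iffD1, OF _ _ z] by simp
  hence vi: "\<And>i. i<n \<Longrightarrow> i \<noteq> 0 \<Longrightarrow> v i = 0" by simp
  show ?thesis
    by (rule exI[of _ "1\<^sub>m n"], insert vi True n, auto)
next
  case False
  \<comment> \<open>The reflection in the hyperplane orthogonal to \<open>u = v - e\<^sub>0\<close> swaps \<open>e\<^sub>0\<close> and \<open>v\<close>; since
    \<open>|u|\<^sup>2 = 2 (1 - v\<^sub>0)\<close>, it is \<open>I - u u\<^sup>T / (1 - v\<^sub>0)\<close>.\<close>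
  define c where "c = 1 - v 0"
  have c0: "c \<noteq> 0" using False by (simp add: c_def)
  define u where "u = (\<lambda>i. v i - (if i = 0 then 1 else 0))"
  have uu: "(\<Sum>k<n. u k * u k) = 2 * c"
  proof -
    have "(\<Sum>k<n. u k * u k) = (\<Sum>k<n. (v k)^2 - 2 * (if k = 0 then v k else 0) + (if k = 0 then 1 else 0))"
      unfolding u_def by (rule sum.cong, auto simp: power2_eq_square algebra_simps)
    also have "\<dots> = 1 - 2 * v 0 + 1" using n unit
      by (simp add: sum.distrib sum_subtractf sum_distrib_left[symmetric])
    finally show ?thesis by (simp add: c_def)
  qed
  define H where "H = mat n n (\<lambda>(i,j). (if i = j then 1 else 0) - u i * u j / c)"
  have H: "H \<in> carrier_mat n n" by (simp add: H_def)
  have "transpose_mat H = H" by (rule eq_matI, auto simp: H_def mult.commute)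
  moreover have "H * H = 1\<^sub>m n" unfolding H_def by (rule reflection_mat_involution[OF c0 uu])
  moreover have "\<forall>i<n. H $$ (i,0) = v i" using n c0
    by (auto simp: H_def u_def c_def field_simps)
  ultimately show ?thesis using H by blast
qed

lemma symmetric_householder_deflation:
  fixes A :: "real mat"
  assumes A: "A \<in> carrier_mat (Suc m) (Suc m)" and At: "transpose_mat A = A"
  shows "\<exists>H \<mu> A'. H \<in> carrier_mat (Suc m) (Suc m) \<and> transpose_mat H = H \<and> H * H = 1\<^sub>m (Suc m) \<and>
           A' \<in> carrier_mat m m \<and> transpose_mat A' = A' \<and>
           H * A * H = four_block_mat (mat 1 1 (\<lambda>_. \<mu>)) (0\<^sub>m 1 m) (0\<^sub>m m 1) A'"
proof -
  let ?n = "Suc m"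
  have symA: "A $$ (i,j) = A $$ (j,i)" if "i < ?n" "j < ?n" for i j
    using arg_cong[OF At, of "\<lambda>M. M $$ (i,j)"] that A by auto
  obtain \<mu> v where vu: "(\<Sum>i<?n. (v i)^2) = 1"
    and ev: "\<And>i. i < ?n \<Longrightarrow> (\<Sum>j<?n. A $$ (i,j) * v j) = \<mu> * v i"
    using symmetric_real_eigenvector[of ?n "\<lambda>i j. A $$ (i,j)"] symA by blast
  obtain H where H: "H \<in> carrier_mat ?n ?n" and Ht: "transpose_mat H = H" and HH: "H * H = 1\<^sub>m ?n"
    and H0: "\<And>i. i < ?n \<Longrightarrow> H $$ (i,0) = v i"
    using householder_reflection_exists[of ?n v] vu by auto
  define B where "B = H * A * H"
  have B: "B \<in> carrier_mat ?n ?n" using H A by (simp add: B_def)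
  have Bt: "transpose_mat B = B" unfolding B_def
    using H A by (simp add: transpose_mult[of _ ?n ?n _ ?n] Ht At assoc_mult_mat[of _ ?n ?n _ ?n _ ?n])
  have colH: "col H 0 = vec ?n v" using H H0 by (auto intro!: eq_vecI)
  have Av: "A *\<^sub>v vec ?n v = \<mu> \<cdot>\<^sub>v vec ?n v"
    using A ev by (auto intro!: eq_vecI simp: scalar_prod_def atLeast0LessThan Matrix.row_def)
  have colB: "col B 0 = \<mu> \<cdot>\<^sub>v unit_vec ?n 0"
  proof -
    have "col B 0 = (H * A) *\<^sub>v col H 0" unfolding B_def
      by (rule col_mult2[of _ ?n ?n]) (use H A in auto)
    also have "\<dots> = H *\<^sub>v (A *\<^sub>v vec ?n v)" unfolding colH
      by (rule assoc_mult_mat_vec[of _ ?n ?n _ ?n]) (use H A in auto)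
    also have "\<dots> = \<mu> \<cdot>\<^sub>v (H *\<^sub>v col H 0)" unfolding Av colH
      by (rule mult_mat_vec[of _ ?n ?n]) (use H in auto)
    also have "H *\<^sub>v col H 0 = col (H * H) 0"
      by (rule col_mult2[symmetric, of _ ?n ?n]) (use H in auto)
    also have "\<dots> = unit_vec ?n 0" unfolding HH by simp
    finally show ?thesis .
  qed
  have Bi0: "B $$ (i,0) = (if i = 0 then \<mu> else 0)" if "i < ?n" for i
    using arg_cong[OF colB, of "\<lambda>w. w $ i"] that B by (auto simp: unit_vec_def)
  have B0j: "B $$ (0,j) = (if j = 0 then \<mu> else 0)" if "j < ?n" for j
    using arg_cong[OF Bt, of "\<lambda>M. M $$ (j,0)"] Bi0[OF that] that B by auto
  define A' where "A' = mat m m (\<lambda>(i,j). B $$ (Suc i, Suc j))"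
  have symB: "B $$ (i,j) = B $$ (j,i)" if "i < ?n" "j < ?n" for i j
    using arg_cong[OF Bt, of "\<lambda>M. M $$ (i,j)"] that B by auto
  have A't: "transpose_mat A' = A'" using symB by (auto intro!: eq_matI simp: A'_def)
  have "B = four_block_mat (mat 1 1 (\<lambda>_. \<mu>)) (0\<^sub>m 1 m) (0\<^sub>m m 1) A'"
  proof (rule eq_matI)
    fix i j assume "i < dim_row (four_block_mat (mat 1 1 (\<lambda>_. \<mu>)) (0\<^sub>m 1 m) (0\<^sub>m m 1) A')"
      and "j < dim_col (four_block_mat (mat 1 1 (\<lambda>_. \<mu>)) (0\<^sub>m 1 m) (0\<^sub>m m 1) A')"
    then show "B $$ (i,j) = four_block_mat (mat 1 1 (\<lambda>_. \<mu>)) (0\<^sub>m 1 m) (0\<^sub>m m 1) A' $$ (i,j)"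
      by (cases i; cases j) (auto simp: A'_def Bi0 B0j)
  qed (use B in \<open>auto simp: A'_def\<close>)
  moreover have "A' \<in> carrier_mat m m" by (simp add: A'_def)
  ultimately show ?thesis using H Ht HH A't unfolding B_def by blast
qed

lemma orthogonal_block_extension:
  fixes V :: "real mat"
  assumes V: "V \<in> carrier_mat m m" and VV: "transpose_mat V * V = 1\<^sub>m m"
  defines "G \<equiv> four_block_mat (1\<^sub>m 1) (0\<^sub>m 1 m) (0\<^sub>m m 1) V"
  shows "G \<in> carrier_mat (Suc m) (Suc m)" and "transpose_mat G * G = 1\<^sub>m (Suc m)"
    and "G * diag_matrix (Suc m) d * transpose_mat G
         = four_block_mat (mat 1 1 (\<lambda>_. d 0)) (0\<^sub>m 1 m) (0\<^sub>m m 1)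
             (V * diag_matrix m (\<lambda>i. d (Suc i)) * transpose_mat V)"
proof -
  have Vt: "transpose_mat V \<in> carrier_mat m m" using V by simp
  have VD: "V * diag_matrix m (\<lambda>i. d (Suc i)) \<in> carrier_mat m m" using V by simp
  have D: "diag_matrix (Suc m) d = four_block_mat (mat 1 1 (\<lambda>_. d 0)) (0\<^sub>m 1 m) (0\<^sub>m m 1)
             (diag_matrix m (\<lambda>i. d (Suc i)))"
    by (rule eq_matI) (auto simp: diag_matrix_def)
  have Gt: "transpose_mat G = four_block_mat (1\<^sub>m 1) (0\<^sub>m 1 m) (0\<^sub>m m 1) (transpose_mat V)"
    unfolding G_def using transpose_four_block_mat[of "1\<^sub>m 1" 1 1 "0\<^sub>m 1 m" m "0\<^sub>m m 1" m V] V
    by simp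
  show "G \<in> carrier_mat (Suc m) (Suc m)"
    unfolding G_def using four_block_carrier_mat[OF one_carrier_mat[of 1] V] by simp
  show "transpose_mat G * G = 1\<^sub>m (Suc m)"
    unfolding Gt unfolding G_def
    using mult_four_block_mat[OF one_carrier_mat zero_carrier_mat zero_carrier_mat Vt
        one_carrier_mat zero_carrier_mat zero_carrier_mat V] V VV
    by simp
  have GD: "G * diag_matrix (Suc m) d = four_block_mat (mat 1 1 (\<lambda>_. d 0)) (0\<^sub>m 1 m) (0\<^sub>m m 1)
             (V * diag_matrix m (\<lambda>i. d (Suc i)))"
    unfolding D unfolding G_def
    using mult_four_block_mat[OF one_carrier_mat zero_carrier_mat zero_carrier_mat V
        _ zero_carrier_mat zero_carrier_mat diag_matrix_carrier, of "mat 1 1 (\<lambda>_. d 0)"] V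
    by (simp add: left_mult_zero_mat[OF diag_matrix_carrier])
  show "G * diag_matrix (Suc m) d * transpose_mat G = four_block_mat (mat 1 1 (\<lambda>_. d 0))
          (0\<^sub>m 1 m) (0\<^sub>m m 1) (V * diag_matrix m (\<lambda>i. d (Suc i)) * transpose_mat V)"
    unfolding GD Gt
    using mult_four_block_mat[OF _ zero_carrier_mat zero_carrier_mat VD
        one_carrier_mat zero_carrier_mat zero_carrier_mat Vt, of "mat 1 1 (\<lambda>_. d 0)"] V
    by (simp add: right_mult_zero_mat[OF VD] left_add_zero_mat[OF mult_carrier_mat[OF VD Vt]])
qed

lemma involution_orthogonal_congruence:
  fixes H G A D :: "real mat"
  assumes H: "H \<in> carrier_mat n n" and Ht: "transpose_mat H = H" and HH: "H * H = 1\<^sub>m n"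
    and G: "G \<in> carrier_mat n n" and GG: "transpose_mat G * G = 1\<^sub>m n"
    and A: "A \<in> carrier_mat n n" and D: "D \<in> carrier_mat n n"
    and GDG: "G * D * transpose_mat G = H * A * H"
  shows "transpose_mat (H * G) * (H * G) = 1\<^sub>m n"
    and "A = (H * G) * D * transpose_mat (H * G)"
proof -
  have Gt: "transpose_mat G \<in> carrier_mat n n" using G by simp
  have HGt: "transpose_mat (H * G) = transpose_mat G * H"
    using transpose_mult[OF H G] Ht by simp
  have "transpose_mat (H * G) * (H * G) = transpose_mat G * (H * H) * G"
    unfolding HGt using H G by (simp add: assoc_mult_mat[of _ n n _ n _ n])
  thus "transpose_mat (H * G) * (H * G) = 1\<^sub>m n" unfolding HH using G GG by simp
  have "A = (H * H) * A * (H * H)" unfolding HH using A by simp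
  also have "\<dots> = H * (G * D * transpose_mat G) * H"
    unfolding GDG using H A by (simp add: assoc_mult_mat[of _ n n _ n _ n])
  also have "\<dots> = (H * G) * D * transpose_mat (H * G)"
  proof -
    have "D * transpose_mat G \<in> carrier_mat n n" "G * (D * transpose_mat G) \<in> carrier_mat n n"
      "transpose_mat G * H \<in> carrier_mat n n" "D * (transpose_mat G * H) \<in> carrier_mat n n"
      using H G Gt D by (auto intro!: mult_carrier_mat)
    thus ?thesis unfolding HGt using H G Gt D by (simp add: assoc_mult_mat[of _ n n _ n _ n])
  qed
  finally show "A = (H * G) * D * transpose_mat (H * G)" .
qed

theorem symmetric_orthogonal_diagonalization:
  fixes A :: "real mat"
  assumes "A \<in> carrier_mat n n" "transpose_mat A = A"
  shows "\<exists>V d. V \<in> carrier_mat n n \<and> transpose_mat V * V = 1\<^sub>m n \<and>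
           A = V * diag_matrix n d * transpose_mat V"
  using assms
proof (induction n arbitrary: A)
  case 0
  show ?case
    by (rule exI[of _ "1\<^sub>m 0"], rule exI[of _ "\<lambda>_. 0"]) (use 0 in \<open>auto intro!: eq_matI\<close>)
next
  case (Suc m A)
  let ?n = "Suc m"
  obtain H \<mu> A' where H: "H \<in> carrier_mat ?n ?n" and Ht: "transpose_mat H = H"
    and HH: "H * H = 1\<^sub>m ?n" and A': "A' \<in> carrier_mat m m" "transpose_mat A' = A'"
    and HAH: "H * A * H = four_block_mat (mat 1 1 (\<lambda>_. \<mu>)) (0\<^sub>m 1 m) (0\<^sub>m m 1) A'"
    using symmetric_householder_deflation[OF Suc.prems] by blast
  obtain V' d' where V': "V' \<in> carrier_mat m m" and V'V': "transpose_mat V' * V' = 1\<^sub>m m"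
    and A'_eq: "A' = V' * diag_matrix m d' * transpose_mat V'"
    using Suc.IH[OF A'] by blast
  define G where "G = four_block_mat (1\<^sub>m 1) (0\<^sub>m 1 m) (0\<^sub>m m 1) V'"
  define d where "d = case_nat \<mu> d'"
  note G = orthogonal_block_extension(1,2)[OF V' V'V', folded G_def]
  have GDG: "G * diag_matrix ?n d * transpose_mat G = H * A * H"
    unfolding orthogonal_block_extension(3)[OF V' V'V', of d, folded G_def] HAH A'_eq
    by (simp add: d_def)
  show ?case
    using involution_orthogonal_congruence[OF H Ht HH G Suc.prems(1) diag_matrix_carrier GDG]
      mult_carrier_mat[OF H G(1)] by blast
qed

lemma orthogonal_right_inverse:
  fixes V :: "real mat"
  assumes "V \<in> carrier_mat n n" and "transpose_mat V * V = 1\<^sub>m n"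
  shows "V * transpose_mat V = 1\<^sub>m n"
  using mat_mult_left_right_inverse[of "transpose_mat V" n V] assms by simp

lemma orthogonal_congruence_cancel:
  fixes V D :: "real mat"
  assumes V: "V \<in> carrier_mat n n" and VV: "transpose_mat V * V = 1\<^sub>m n"
    and D: "D \<in> carrier_mat n n"
  shows "transpose_mat V * (V * D * transpose_mat V) * V = D"
proof -
  have Vt: "transpose_mat V \<in> carrier_mat n n" using V by simp
  have "transpose_mat V * (V * D * transpose_mat V) * V
      = (transpose_mat V * V) * D * (transpose_mat V * V)"
    using V Vt D by (simp add: assoc_mult_mat[of _ n n _ n _ n])
  thus ?thesis unfolding VV using D by simp
qed

section \<open>The trace norm\<close>

lemma prod_linear_factors_nonzero: "(\<Prod>a\<leftarrow>es. [:- a, 1:]) \<noteq> (0 :: real poly)"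
  by (auto simp: prod_list_zero_iff)

lemma sum_roots_order_prod_linear_superset:
  fixes f :: "real \<Rightarrow> real"
  assumes "finite R" "{r. poly (\<Prod>a\<leftarrow>es. [:- a, 1:]) r = 0} \<subseteq> R"
  shows "(\<Sum>r\<in>R. f r * real (order r (\<Prod>a\<leftarrow>es. [:- a, 1:]))) = (\<Sum>a\<leftarrow>es. f a)"
  using assms(2)
proof (induction es)
  case Nil
  show ?case by simp
next
  case (Cons e es)
  let ?p = "\<Prod>a\<leftarrow>es. [:- a, 1:]"
  have pe: "(\<Prod>a\<leftarrow>e#es. [:- a, 1:]) = [:-e,1:] * ?p" by simp
  have sub: "{r. poly ?p r = 0} \<subseteq> R" and eR: "e \<in> R" using Cons.prems unfolding pe by auto
  have ord: "order r ([:-e,1:] * ?p) = (if r = e then 1 else 0) + order r ?p" for r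
  proof -
    have "[:-e,1:] \<noteq> (0::real poly)" by simp
    hence nz: "[:-e,1:] * ?p \<noteq> 0" by (metis mult_eq_0_iff prod_linear_factors_nonzero)
    show ?thesis unfolding order_mult[OF nz] order_linear' by auto
  qed
  have "(\<Sum>r\<in>R. f r * real (order r (\<Prod>a\<leftarrow>e#es. [:- a, 1:])))
      = (\<Sum>r\<in>R. (if r = e then f r else 0)) + (\<Sum>r\<in>R. f r * real (order r ?p))"
    unfolding pe ord by (simp add: sum.distrib[symmetric] algebra_simps, rule sum.cong, auto)
  also have "\<dots> = f e + (\<Sum>a\<leftarrow>es. f a)" using Cons.IH[OF sub] eR assms(1)
    by (simp add: sum.delta')
  finally show ?case by simp
qed

lemma sum_roots_order_prod_linear:
  fixes f :: "real \<Rightarrow> real"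
  shows "(\<Sum>r\<in>{r. poly (\<Prod>a\<leftarrow>es. [:- a, 1:]) r = 0}. f r * real (order r (\<Prod>a\<leftarrow>es. [:- a, 1:])))
           = (\<Sum>a\<leftarrow>es. f a)"
  by (rule sum_roots_order_prod_linear_superset[OF poly_roots_finite[OF prod_linear_factors_nonzero]])
    simp

lemma char_poly_diag_matrix: "char_poly (diag_matrix n d) = (\<Prod>a\<leftarrow>map d [0..<n]. [:- a, 1:])"
proof -
  have "upper_triangular (diag_matrix n d)" by (auto simp: upper_triangular_def diag_matrix_def)
  moreover have "diag_mat (diag_matrix n d) = map d [0..<n]"
    by (rule nth_equalityI) (auto simp: diag_mat_def diag_matrix_def)
  ultimately show ?thesis using char_poly_upper_triangular[OF diag_matrix_carrier] by simp
qed

lemma char_poly_orthogonal_congruence: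
  assumes V: "V \<in> carrier_mat n n" and VV: "transpose_mat V * V = 1\<^sub>m n"
  shows "char_poly (V * diag_matrix n d * transpose_mat V) = (\<Prod>a\<leftarrow>map d [0..<n]. [:- a, 1:])"
proof -
  have "similar_mat_wit (V * diag_matrix n d * transpose_mat V) (diag_matrix n d) V (transpose_mat V)"
    unfolding similar_mat_wit_def Let_def
    using V VV orthogonal_right_inverse[OF V VV] by auto
  hence "char_poly (V * diag_matrix n d * transpose_mat V) = char_poly (diag_matrix n d)"
    by (intro char_poly_similar) (auto simp: similar_mat_def)
  thus ?thesis by (simp add: char_poly_diag_matrix)
qed

lemma trace_norm_eq_sum_sqrt_eigenvalues:
  assumes V: "V \<in> carrier_mat n n" and VV: "transpose_mat V * V = 1\<^sub>m n"
    and WW: "transpose_mat (to_mat n W) * to_mat n W = V * diag_matrix n e * transpose_mat V"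
  shows "trace_norm n W = (\<Sum>k<n. sqrt (e k))"
proof -
  have "trace_norm n W = (\<Sum>a\<leftarrow>map e [0..<n]. sqrt a)"
    unfolding trace_norm_def Let_def WW char_poly_orthogonal_congruence[OF V VV]
    by (rule sum_roots_order_prod_linear)
  also have "\<dots> = (\<Sum>k<n. sqrt (e k))" by (simp add: sum_list_sum_nth atLeast0LessThan)
  finally show ?thesis .
qed

lemma to_mat_carrier[simp]: "to_mat n W \<in> carrier_mat n n"
  by (simp add: to_mat_def)

lemma index_to_mat[simp]: "i < n \<Longrightarrow> j < n \<Longrightarrow> to_mat n W $$ (i,j) = W i j"
  by (simp add: to_mat_def)

definition bilin :: "nat \<Rightarrow> (nat \<Rightarrow> nat \<Rightarrow> real) \<Rightarrow> (nat \<Rightarrow> real) \<Rightarrow> (nat \<Rightarrow> real) \<Rightarrow> real" where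
  "bilin n N x y = (\<Sum>i<n. \<Sum>j<n. x i * N i j * y j)"

lemma bilin_swap:
  assumes "\<And>i j. i < n \<Longrightarrow> j < n \<Longrightarrow> N i j = N j i"
  shows "bilin n N y x = bilin n N x y"
proof -
  have "bilin n N y x = (\<Sum>j<n. \<Sum>i<n. y i * N i j * x j)" unfolding bilin_def by (rule sum.swap)
  also have "\<dots> = bilin n N x y" unfolding bilin_def by (intro sum.cong refl) (simp add: assms mult_ac)
  finally show ?thesis .
qed

lemma bilin_cong: "(\<And>i j. i < n \<Longrightarrow> j < n \<Longrightarrow> M i j = N i j) \<Longrightarrow> bilin n M x y = bilin n N x y"
  unfolding bilin_def by (intro sum.cong refl) auto

lemma bilin_diff_left: "bilin n (\<lambda>i j. M i j - N i j) x y = bilin n M x y - bilin n N x y"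
  unfolding bilin_def by (simp add: sum_subtractf[symmetric] algebra_simps)

lemma bilin_polarization:
  "bilin n N (\<lambda>i. x i + y i) (\<lambda>i. x i + y i) - bilin n N (\<lambda>i. x i - y i) (\<lambda>i. x i - y i)
     = 2 * (bilin n N x y + bilin n N y x)"
  unfolding bilin_def
  by (simp add: sum_subtractf[symmetric] sum.distrib[symmetric] sum_distrib_left algebra_simps)

lemma bilin_scale: "bilin n N (\<lambda>i. t * x i) (\<lambda>i. s * y i) = t * s * bilin n N x y"
  unfolding bilin_def by (simp add: sum_distrib_left mult_ac)

lemma bilin_ones: "bilin n (\<lambda>i j. 1) y y = (\<Sum>i<n. y i)^2"
  unfolding bilin_def power2_eq_square by (simp add: sum_distrib_left sum_distrib_right mult_ac)

lemma bilin_mask: "bilin n (\<lambda>i j. t i * t j * N i j) x x = bilin n N (\<lambda>i. t i * x i) (\<lambda>i. t i * x i)"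
  unfolding bilin_def by (intro sum.cong refl) (simp add: mult_ac)

lemma bilin_blocks:
  "bilin n (\<lambda>i j. (\<Sum>l<k. f l i * f l j) * M i j) x y
     = (\<Sum>l<k. bilin n M (\<lambda>i. f l i * x i) (\<lambda>i. f l i * y i))"
proof -
  have "bilin n (\<lambda>i j. (\<Sum>l<k. f l i * f l j) * M i j) x y
      = (\<Sum>i<n. \<Sum>j<n. \<Sum>l<k. (f l i * x i) * M i j * (f l j * y j))"
    unfolding bilin_def by (intro sum.cong refl) (simp add: sum_distrib_left sum_distrib_right mult_ac)
  also have "\<dots> = (\<Sum>i<n. \<Sum>l<k. \<Sum>j<n. (f l i * x i) * M i j * (f l j * y j))"
    by (rule sum.cong[OF refl], rule sum.swap)
  also have "\<dots> = (\<Sum>l<k. \<Sum>i<n. \<Sum>j<n. (f l i * x i) * M i j * (f l j * y j))"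
    by (rule sum.swap)
  finally show ?thesis unfolding bilin_def .
qed

lemma bilin_add_diag:
  "(\<Sum>i<n. \<Sum>j<n. x i * (X i j + (if i = j then c else 0)) * x j) = bilin n X x x + c * (\<Sum>i<n. (x i)^2)"
proof -
  have "(\<Sum>i<n. \<Sum>j<n. x i * (X i j + (if i = j then c else 0)) * x j)
      = (\<Sum>i<n. (\<Sum>j<n. x i * X i j * x j) + (\<Sum>j<n. if i = j then c * (x i)^2 else 0))"
  proof (rule sum.cong[OF refl])
    fix i assume "i \<in> {..<n}"
    show "(\<Sum>j<n. x i * (X i j + (if i = j then c else 0)) * x j)
      = (\<Sum>j<n. x i * X i j * x j) + (\<Sum>j<n. if i = j then c * (x i)^2 else 0)"
      unfolding sum.distrib[symmetric] by (rule sum.cong[OF refl], auto simp: algebra_simps power2_eq_square)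
  qed
  also have "\<dots> = bilin n X x x + c * (\<Sum>i<n. (x i)^2)"
    by (simp add: bilin_def sum.distrib sum_distrib_left)
  finally show ?thesis .
qed

lemma bilin_diag_diff:
  "(\<Sum>i<n. \<Sum>j<n. x i * ((if i = j then c else 0) - X i j) * x j) = c * (\<Sum>i<n. (x i)^2) - bilin n X x x"
proof -
  have "(\<Sum>i<n. \<Sum>j<n. x i * ((if i = j then c else 0) - X i j) * x j)
      = (\<Sum>i<n. (\<Sum>j<n. if i = j then c * (x i)^2 else 0) - (\<Sum>j<n. x i * X i j * x j))"
  proof (rule sum.cong[OF refl])
    fix i assume "i \<in> {..<n}"
    show "(\<Sum>j<n. x i * ((if i = j then c else 0) - X i j) * x j)
      = (\<Sum>j<n. if i = j then c * (x i)^2 else 0) - (\<Sum>j<n. x i * X i j * x j)"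
      unfolding sum_subtractf[symmetric] by (rule sum.cong[OF refl], auto simp: algebra_simps power2_eq_square)
  qed
  also have "\<dots> = c * (\<Sum>i<n. (x i)^2) - bilin n X x x"
    by (simp add: bilin_def sum_subtractf sum_distrib_left)
  finally show ?thesis .
qed

lemma quad_bound_of_psd_shifts:
  assumes "psd n (\<lambda>i j. X i j + (if i = j then c else 0))"
    and "psd n (\<lambda>i j. (if i = j then c else 0) - X i j)"
  shows "\<bar>bilin n X x x\<bar> \<le> c * (\<Sum>i<n. (x i)^2)"
proof -
  have "0 \<le> bilin n X x x + c * (\<Sum>i<n. (x i)^2)"
    using assms(1) unfolding psd_def bilin_add_diag by blast
  moreover have "0 \<le> c * (\<Sum>i<n. (x i)^2) - bilin n X x x"
    using assms(2) unfolding psd_def bilin_diag_diff by blast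
  ultimately show ?thesis by linarith
qed

lemma psd_shifts_of_quad_bound:
  assumes sym: "\<And>i j. i < n \<Longrightarrow> j < n \<Longrightarrow> X i j = X j i"
    and bound: "\<And>x. \<bar>bilin n X x x\<bar> \<le> c * (\<Sum>i<n. (x i)^2)"
  shows "psd n (\<lambda>i j. X i j + (if i = j then c else 0))"
    and "psd n (\<lambda>i j. (if i = j then c else 0) - X i j)"
proof -
  show "psd n (\<lambda>i j. X i j + (if i = j then c else 0))"
    unfolding psd_def bilin_add_diag
  proof (intro conjI allI impI)
    fix x :: "nat \<Rightarrow> real"
    show "0 \<le> bilin n X x x + c * (\<Sum>i<n. (x i)^2)" using bound[of x] by linarith
  qed (use sym in auto)
  show "psd n (\<lambda>i j. (if i = j then c else 0) - X i j)"
    unfolding psd_def bilin_diag_diff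
  proof (intro conjI allI impI)
    fix x :: "nat \<Rightarrow> real"
    show "0 \<le> c * (\<Sum>i<n. (x i)^2) - bilin n X x x" using bound[of x] by linarith
  qed (use sym in auto)
qed

lemma bilin_le_of_quad_bound_am_gm:
  assumes sym: "\<And>i j. i < n \<Longrightarrow> j < n \<Longrightarrow> N i j = N j i"
    and bound: "\<And>x. \<bar>bilin n N x x\<bar> \<le> \<mu> * (\<Sum>i<n. (x i)^2)"
  shows "bilin n N u w \<le> \<mu> / 2 * ((\<Sum>i<n. (u i)^2) + (\<Sum>i<n. (w i)^2))"
proof -
  have "bilin n N w u = bilin n N u w" using sym by (rule bilin_swap)
  hence "4 * bilin n N u w
      = bilin n N (\<lambda>i. u i + w i) (\<lambda>i. u i + w i) - bilin n N (\<lambda>i. u i - w i) (\<lambda>i. u i - w i)"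
    using bilin_polarization[of n N u w] by simp
  also have "\<dots> \<le> \<mu> * ((\<Sum>i<n. (u i + w i)^2) + (\<Sum>i<n. (u i - w i)^2))"
    using bound[of "\<lambda>i. u i + w i"] bound[of "\<lambda>i. u i - w i"] by (simp add: distrib_left abs_le_iff)
  also have "\<dots> = 2 * \<mu> * ((\<Sum>i<n. (u i)^2) + (\<Sum>i<n. (w i)^2))"
    by (simp add: sum.distrib[symmetric] sum_distrib_left power2_eq_square algebra_simps)
  finally show ?thesis by simp
qed

lemma bilin_le_of_quad_bound:
  assumes sym: "\<And>i j. i < n \<Longrightarrow> j < n \<Longrightarrow> N i j = N j i"
    and bound: "\<And>x. \<bar>bilin n N x x\<bar> \<le> \<mu> * (\<Sum>i<n. (x i)^2)" and \<mu>: "0 \<le> \<mu>"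
  shows "bilin n N x y \<le> \<mu> * sqrt (\<Sum>i<n. (x i)^2) * sqrt (\<Sum>i<n. (y i)^2)"
proof -
  \<comment> \<open>Rescale \<open>x \<mapsto> t x\<close>, \<open>y \<mapsto> y / t\<close> so that the arithmetic mean becomes the geometric one.\<close>
  define X where "X = (\<Sum>i<n. (x i)^2)"
  define Y where "Y = (\<Sum>i<n. (y i)^2)"
  have XY: "X \<ge> 0" "Y \<ge> 0" unfolding X_def Y_def by (auto intro: sum_nonneg)
  show ?thesis
  proof (cases "X = 0 \<or> Y = 0")
    case True
    hence "(\<forall>i<n. x i = 0) \<or> (\<forall>i<n. y i = 0)"
      unfolding X_def Y_def by (auto simp: sum_nonneg_eq_0_iff)
    hence "bilin n N x y = 0" unfolding bilin_def by auto
    thus ?thesis using \<mu> by (simp add: X_def[symmetric] Y_def[symmetric] XY)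
  next
    case False
    hence X: "X > 0" and Y: "Y > 0" using XY by auto
    define t where "t = sqrt (sqrt Y / sqrt X)"
    have t: "t > 0" "t^2 = sqrt Y / sqrt X" using X Y by (simp_all add: t_def)
    have "bilin n N x y = bilin n N (\<lambda>i. t * x i) (\<lambda>i. (1/t) * y i)"
      using t bilin_scale[of n N t x "1/t" y] by simp
    also have "\<dots> \<le> \<mu> / 2 * ((\<Sum>i<n. (t * x i)^2) + (\<Sum>i<n. ((1/t) * y i)^2))"
      by (rule bilin_le_of_quad_bound_am_gm[OF sym bound])
    also have "(\<Sum>i<n. (t * x i)^2) = t^2 * X" unfolding X_def
      by (simp add: power_mult_distrib sum_distrib_left)
    also have "(\<Sum>i<n. ((1/t) * y i)^2) = Y / t^2" unfolding Y_def
      by (simp add: power_mult_distrib power_divide sum_divide_distrib)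
    also have "t^2 * X + Y / t^2 = 2 * (sqrt X * sqrt Y)" unfolding t(2) using X Y
      by (simp add: field_simps)
    finally show ?thesis by (simp add: X_def Y_def mult_ac)
  qed
qed
lemma trace_norm_rank_one_decomposition:
  fixes W :: "nat \<Rightarrow> nat \<Rightarrow> real"
  obtains d U V where "trace_norm n W = (\<Sum>k<n. sqrt (d k))"
    and "\<And>i j. i < n \<Longrightarrow> j < n \<Longrightarrow> W i j = (\<Sum>k<n. U i k * V j k)"
    and "\<And>k. k < n \<Longrightarrow> (\<Sum>i<n. (U i k)^2) = d k"
    and "\<And>k. k < n \<Longrightarrow> (\<Sum>j<n. (V j k)^2) = 1"
proof -
  define Wm where "Wm = to_mat n W"
  have Wm: "Wm \<in> carrier_mat n n" by (simp add: Wm_def)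
  define P where "P = transpose_mat Wm * Wm"
  have P: "P \<in> carrier_mat n n" using Wm by (simp add: P_def)
  have Pt: "transpose_mat P = P" unfolding P_def using transpose_mult[of "transpose_mat Wm" n n Wm n] Wm by simp
  obtain V d where V: "V \<in> carrier_mat n n" and VV: "transpose_mat V * V = 1\<^sub>m n"
    and Pd: "P = V * diag_matrix n d * transpose_mat V"
    using symmetric_orthogonal_diagonalization[OF P Pt] by blast
  have tn: "trace_norm n W = (\<Sum>k<n. sqrt (d k))"
    using trace_norm_eq_sum_sqrt_eigenvalues[OF V VV, of W d] Pd unfolding P_def Wm_def by simp
  have VV': "V * transpose_mat V = 1\<^sub>m n" by (rule orthogonal_right_inverse[OF V VV])
  define U where "U = Wm * V"
  have U: "U \<in> carrier_mat n n" using Wm V by (simp add: U_def)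
  have F1: "W i j = (\<Sum>k<n. U $$ (i,k) * V $$ (j,k))" if ij: "i<n" "j<n" for i j
  proof -
    have "Wm = Wm * (V * transpose_mat V)" unfolding VV' using Wm by simp
    also have "\<dots> = U * transpose_mat V" unfolding U_def
      by (rule assoc_mult_mat[symmetric, of _ n n _ n _ n], insert Wm V, auto)
    finally have "Wm $$ (i,j) = (U * transpose_mat V) $$ (i,j)" by simp
    also have "\<dots> = (\<Sum>k<n. U $$ (i,k) * V $$ (j,k))"
      using index_mult_mat_sum[OF U _ ij, of "transpose_mat V"] V ij by simp
    finally show ?thesis using ij by (simp add: Wm_def)
  qed
  have F2: "(\<Sum>i<n. (U $$ (i,k))^2) = d k" if k: "k<n" for k
  proof -
    have "transpose_mat U * U = transpose_mat V * P * V"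
      unfolding U_def P_def using transpose_mult[OF Wm V] Wm V
      by (simp add: assoc_mult_mat[of _ n n _ n _ n])
    also have "\<dots> = diag_matrix n d" unfolding Pd
      by (rule orthogonal_congruence_cancel[OF V VV diag_matrix_carrier])
    finally have "(transpose_mat U * U) $$ (k,k) = d k" using k by (simp add: diag_matrix_def)
    moreover have "(transpose_mat U * U) $$ (k,k) = (\<Sum>i<n. (U $$ (i,k))^2)"
      using index_mult_mat_sum[of "transpose_mat U" n n U n k k] U k by (simp add: power2_eq_square)
    ultimately show ?thesis by simp
  qed
  have F3: "(\<Sum>j<n. (V $$ (j,k))^2) = 1" if k: "k<n" for k
  proof -
    have "(transpose_mat V * V) $$ (k,k) = (\<Sum>j<n. (V $$ (j,k))^2)"
      using index_mult_mat_sum[of "transpose_mat V" n n V n k k] V k by (simp add: power2_eq_square)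
    thus ?thesis unfolding VV using k by simp
  qed
  show ?thesis using that[of d "\<lambda>i k. U $$ (i,k)" "\<lambda>j k. V $$ (j,k)"] tn F1 F2 F3 by blast
qed

lemma sum_mult_le_trace_norm:
  fixes N W :: "nat \<Rightarrow> nat \<Rightarrow> real"
  assumes sym: "\<And>i j. i<n \<Longrightarrow> j<n \<Longrightarrow> N i j = N j i"
    and bound: "\<And>x. \<bar>bilin n N x x\<bar> \<le> \<mu> * (\<Sum>i<n. (x i)^2)" and \<mu>: "0 \<le> \<mu>"
  shows "(\<Sum>i<n. \<Sum>j<n. N i j * W i j) \<le> \<mu> * trace_norm n W"
proof -
  obtain d U V where tn: "trace_norm n W = (\<Sum>k<n. sqrt (d k))"
    and W: "\<And>i j. i < n \<Longrightarrow> j < n \<Longrightarrow> W i j = (\<Sum>k<n. U i k * V j k)"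
    and U: "\<And>k. k < n \<Longrightarrow> (\<Sum>i<n. (U i k)^2) = d k"
    and V: "\<And>k. k < n \<Longrightarrow> (\<Sum>j<n. (V j k)^2) = 1"
    using trace_norm_rank_one_decomposition[where n=n and W=W] by blast
  have "(\<Sum>i<n. \<Sum>j<n. N i j * W i j) = (\<Sum>i<n. \<Sum>j<n. \<Sum>k<n. U i k * N i j * V j k)"
    by (intro sum.cong refl) (simp add: W sum_distrib_left mult_ac)
  also have "\<dots> = (\<Sum>i<n. \<Sum>k<n. \<Sum>j<n. U i k * N i j * V j k)"
    by (rule sum.cong[OF refl], rule sum.swap)
  also have "\<dots> = (\<Sum>k<n. bilin n N (\<lambda>i. U i k) (\<lambda>j. V j k))"
    unfolding bilin_def by (rule sum.swap)
  also have "\<dots> \<le> (\<Sum>k<n. \<mu> * sqrt (d k))"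
  proof (rule sum_mono)
    fix k assume "k \<in> {..<n}"
    then show "bilin n N (\<lambda>i. U i k) (\<lambda>j. V j k) \<le> \<mu> * sqrt (d k)"
      using bilin_le_of_quad_bound[OF sym bound \<mu>, of "\<lambda>i. U i k" "\<lambda>j. V j k"] U V by simp
  qed
  also have "\<dots> = \<mu> * trace_norm n W" unfolding tn by (simp add: sum_distrib_left)
  finally show ?thesis .
qed

lemma diag_matrix_mult_self: "diag_matrix n d * diag_matrix n d = diag_matrix n (\<lambda>k. d k * d k)"
proof (rule eq_matI)
  fix i j assume "i < dim_row (diag_matrix n (\<lambda>k. d k * d k))" "j < dim_col (diag_matrix n (\<lambda>k. d k * d k))"
  hence i: "i < n" and j: "j < n" by (auto simp: diag_matrix_def)
  have "(diag_matrix n d * diag_matrix n d) $$ (i,j) = (\<Sum>k<n. (if i = k then d i else 0) * (if k = j then d k else 0))"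
    using index_mult_mat_sum[OF diag_matrix_carrier diag_matrix_carrier i j] i j by (simp add: diag_matrix_def)
  also have "\<dots> = (if i = j then d i * d i else 0)" using i
    by (simp add: if_distrib[of "\<lambda>x. x * _"] cong: if_cong)
  finally show "(diag_matrix n d * diag_matrix n d) $$ (i,j) = diag_matrix n (\<lambda>k. d k * d k) $$ (i,j)"
    using i j by (simp add: diag_matrix_def)
qed (auto simp: diag_matrix_def)

lemma orthogonal_congruence_square:
  fixes V :: "real mat"
  assumes V: "V \<in> carrier_mat n n" and VV: "transpose_mat V * V = 1\<^sub>m n"
  shows "(V * diag_matrix n d * transpose_mat V) * (V * diag_matrix n d * transpose_mat V)
           = V * diag_matrix n (\<lambda>k. d k * d k) * transpose_mat V"
proof -
  have Vt: "transpose_mat V \<in> carrier_mat n n" using V by simp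
  have VD: "V * diag_matrix n d \<in> carrier_mat n n" using V by simp
  have "(V * diag_matrix n d * transpose_mat V) * (V * diag_matrix n d * transpose_mat V)
      = V * diag_matrix n d * (transpose_mat V * (V * diag_matrix n d * transpose_mat V))"
    by (rule assoc_mult_mat[OF VD Vt]) (use VD Vt in auto)
  also have "transpose_mat V * (V * diag_matrix n d * transpose_mat V) = diag_matrix n d * transpose_mat V"
  proof -
    have "transpose_mat V * (V * diag_matrix n d * transpose_mat V)
        = transpose_mat V * (V * diag_matrix n d) * transpose_mat V"
      using assoc_mult_mat[OF Vt VD Vt] by simp
    also have "transpose_mat V * (V * diag_matrix n d) = diag_matrix n d"
      using assoc_mult_mat[OF Vt V diag_matrix_carrier[of n d]] VV
      by (simp add: left_mult_one_mat[OF diag_matrix_carrier])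
    finally show ?thesis .
  qed
  also have "V * diag_matrix n d * (diag_matrix n d * transpose_mat V)
      = V * (diag_matrix n d * diag_matrix n d) * transpose_mat V"
    using assoc_mult_mat[OF VD diag_matrix_carrier[of n d] Vt]
      assoc_mult_mat[OF V diag_matrix_carrier[of n d] diag_matrix_carrier[of n d]] by simp
  finally show ?thesis unfolding diag_matrix_mult_self .
qed

lemma diag_entry_of_orthogonal_congruence:
  assumes V: "V \<in> carrier_mat n n" and VV: "transpose_mat V * V = 1\<^sub>m n"
    and W: "to_mat n W = V * diag_matrix n d * transpose_mat V" and k: "k < n"
  shows "d k = bilin n W (\<lambda>i. V $$ (i,k)) (\<lambda>i. V $$ (i,k))"
proof -
  have "transpose_mat V * to_mat n W * V = diag_matrix n d"
    unfolding W by (rule orthogonal_congruence_cancel[OF V VV diag_matrix_carrier])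
  hence "(transpose_mat V * to_mat n W * V) $$ (k,k) = d k" using k by (simp add: diag_matrix_def)
  moreover have "(transpose_mat V * to_mat n W * V) $$ (k,k)
      = (\<Sum>j<n. (transpose_mat V * to_mat n W) $$ (k,j) * V $$ (j,k))"
    using index_mult_mat_sum[of "transpose_mat V * to_mat n W" n n V n k k] V k by simp
  moreover have "(transpose_mat V * to_mat n W) $$ (k,j) = (\<Sum>i<n. V $$ (i,k) * W i j)" if "j < n" for j
    using index_mult_mat_sum[of "transpose_mat V" n n "to_mat n W" n k j] V k that by simp
  ultimately have "d k = (\<Sum>j<n. (\<Sum>i<n. V $$ (i,k) * W i j) * V $$ (j,k))" by simp
  also have "\<dots> = (\<Sum>j<n. \<Sum>i<n. V $$ (i,k) * W i j * V $$ (j,k))"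
    by (simp add: sum_distrib_right)
  also have "\<dots> = (\<Sum>i<n. \<Sum>j<n. V $$ (i,k) * W i j * V $$ (j,k))" by (rule sum.swap)
  finally show ?thesis unfolding bilin_def .
qed

lemma sum_bilin_orthogonal_columns:
  assumes V: "V \<in> carrier_mat n n" and VV: "transpose_mat V * V = 1\<^sub>m n"
  shows "(\<Sum>k<n. bilin n W (\<lambda>i. V $$ (i,k)) (\<lambda>i. V $$ (i,k))) = (\<Sum>i<n. W i i)"
proof -
  have Vt: "transpose_mat V \<in> carrier_mat n n" using V by simp
  have "(\<Sum>k<n. bilin n W (\<lambda>i. V $$ (i,k)) (\<lambda>i. V $$ (i,k)))
      = (\<Sum>i<n. \<Sum>k<n. \<Sum>j<n. V $$ (i,k) * W i j * V $$ (j,k))"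
    unfolding bilin_def by (rule sum.swap)
  also have "\<dots> = (\<Sum>i<n. \<Sum>j<n. \<Sum>k<n. V $$ (i,k) * W i j * V $$ (j,k))"
    by (rule sum.cong[OF refl], rule sum.swap)
  also have "\<dots> = (\<Sum>i<n. \<Sum>j<n. W i j * (V * transpose_mat V) $$ (i,j))"
  proof (intro sum.cong refl)
    fix i j assume "i \<in> {..<n}" "j \<in> {..<n}"
    hence ij: "i < n" "j < n" by auto
    show "(\<Sum>k<n. V $$ (i,k) * W i j * V $$ (j,k)) = W i j * (V * transpose_mat V) $$ (i,j)"
      using index_mult_mat_sum[OF V Vt ij] V ij by (simp add: sum_distrib_left mult_ac)
  qed
  also have "\<dots> = (\<Sum>i<n. W i i)" unfolding orthogonal_right_inverse[OF V VV]
    by (rule sum.cong[OF refl]) (simp add: if_distrib[of "\<lambda>x. _ * x"] cong: if_cong)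
  finally show ?thesis .
qed

lemma trace_norm_psd_eq_trace:
  fixes W :: "nat \<Rightarrow> nat \<Rightarrow> real"
  assumes sym: "\<And>i j. i < n \<Longrightarrow> j < n \<Longrightarrow> W i j = W j i"
    and psd: "\<And>x. bilin n W x x \<ge> 0"
  shows "trace_norm n W = (\<Sum>i<n. W i i)"
proof -
  have Wt: "transpose_mat (to_mat n W) = to_mat n W"
    using sym by (auto intro!: eq_matI simp: to_mat_def)
  obtain V d where V: "V \<in> carrier_mat n n" and VV: "transpose_mat V * V = 1\<^sub>m n"
    and W: "to_mat n W = V * diag_matrix n d * transpose_mat V"
    using symmetric_orthogonal_diagonalization[OF to_mat_carrier Wt] by blast
  note eigen = diag_entry_of_orthogonal_congruence[OF V VV W]
  have "transpose_mat (to_mat n W) * to_mat n W = V * diag_matrix n (\<lambda>k. d k * d k) * transpose_mat V"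
    unfolding Wt unfolding W by (rule orthogonal_congruence_square[OF V VV])
  hence "trace_norm n W = (\<Sum>k<n. sqrt (d k * d k))"
    by (rule trace_norm_eq_sum_sqrt_eigenvalues[OF V VV])
  also have "\<dots> = (\<Sum>k<n. bilin n W (\<lambda>i. V $$ (i,k)) (\<lambda>i. V $$ (i,k)))"
    using eigen psd by (intro sum.cong refl) (simp add: real_sqrt_mult_self abs_of_nonneg)
  also have "\<dots> = (\<Sum>i<n. W i i)" by (rule sum_bilin_orthogonal_columns[OF V VV])
  finally show ?thesis .
qed


section \<open>Operator norm of a principal submatrix\<close>

lemma opnorm_on_bdd_above:
  assumes fin: "finite T"
  shows "bdd_above {sqrt (\<Sum>i\<in>T. (\<Sum>j\<in>T. M i j * x j)\<^sup>2) | x. (\<Sum>j\<in>T. (x j)\<^sup>2) \<le> 1}"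
proof (rule bdd_aboveI)
  fix e assume "e \<in> {sqrt (\<Sum>i\<in>T. (\<Sum>j\<in>T. M i j * x j)\<^sup>2) | x. (\<Sum>j\<in>T. (x j)\<^sup>2) \<le> 1}"
  then obtain x where e: "e = sqrt (\<Sum>i\<in>T. (\<Sum>j\<in>T. M i j * x j)\<^sup>2)" and x: "(\<Sum>j\<in>T. (x j)\<^sup>2) \<le> 1" by auto
  have xj: "\<bar>x j\<bar> \<le> 1" if "j \<in> T" for j
  proof -
    have "(x j)^2 \<le> (\<Sum>j\<in>T. (x j)\<^sup>2)" using that fin by (intro member_le_sum, auto)
    hence "(x j)^2 \<le> 1" using x by simp
    thus ?thesis by (simp add: abs_square_le_1)
  qed
  have "\<bar>\<Sum>j\<in>T. M i j * x j\<bar> \<le> (\<Sum>j\<in>T. \<bar>M i j\<bar>)" for i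
  proof -
    have "\<bar>\<Sum>j\<in>T. M i j * x j\<bar> \<le> (\<Sum>j\<in>T. \<bar>M i j * x j\<bar>)" by (rule sum_abs)
    also have "\<dots> \<le> (\<Sum>j\<in>T. \<bar>M i j\<bar>)"
      by (rule sum_mono, simp add: abs_mult, insert xj, auto intro: mult_left_le)
    finally show ?thesis .
  qed
  hence "(\<Sum>j\<in>T. M i j * x j)\<^sup>2 \<le> (\<Sum>j\<in>T. \<bar>M i j\<bar>)\<^sup>2" for i
    by (metis abs_le_square_iff abs_of_nonneg abs_ge_zero order_trans sum_abs_ge_zero)
  hence "(\<Sum>i\<in>T. (\<Sum>j\<in>T. M i j * x j)\<^sup>2) \<le> (\<Sum>i\<in>T. (\<Sum>j\<in>T. \<bar>M i j\<bar>)\<^sup>2)"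
    by (intro sum_mono)
  thus "e \<le> sqrt (\<Sum>i\<in>T. (\<Sum>j\<in>T. \<bar>M i j\<bar>)\<^sup>2)" unfolding e by simp
qed

lemma opnorm_on_ge:
  assumes fin: "finite T" and x: "(\<Sum>j\<in>T. (x j)\<^sup>2) \<le> 1"
  shows "sqrt (\<Sum>i\<in>T. (\<Sum>j\<in>T. M i j * x j)\<^sup>2) \<le> opnorm_on T M"
  unfolding opnorm_on_def by (rule cSup_upper, use x in blast, rule opnorm_on_bdd_above[OF fin])

lemma abs_diag_le_opnorm_on:
  assumes fin: "finite T" and i: "i \<in> T"
  shows "\<bar>M i i\<bar> \<le> opnorm_on T M"
proof -
  define x where "x = (\<lambda>j. if j = i then 1 else (0::real))"
  have "(\<Sum>j\<in>T. (x j)\<^sup>2) = 1" using fin i by (simp add: x_def if_distrib[of "\<lambda>x. x^2"] cong: if_cong)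
  hence le: "sqrt (\<Sum>i'\<in>T. (\<Sum>j\<in>T. M i' j * x j)\<^sup>2) \<le> opnorm_on T M" by (intro opnorm_on_ge[OF fin], simp)
  have inner: "(\<Sum>j\<in>T. M i' j * x j) = M i' i" for i'
    using fin i by (simp add: x_def if_distrib[of "\<lambda>x. _ * x"] cong: if_cong)
  have "(M i i)^2 \<le> (\<Sum>i'\<in>T. (M i' i)\<^sup>2)" using fin i by (intro member_le_sum, auto)
  hence "\<bar>M i i\<bar> \<le> sqrt (\<Sum>i'\<in>T. (M i' i)\<^sup>2)" by (simp add: real_le_rsqrt)
  thus ?thesis using le unfolding inner by simp
qed

lemma abs_quad_le_opnorm_on:
  assumes fin: "finite T" and op: "opnorm_on T M \<le> lam"
  shows "\<bar>\<Sum>i\<in>T. \<Sum>j\<in>T. x i * M i j * x j\<bar> \<le> lam * (\<Sum>i\<in>T. (x i)^2)"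
proof -
  define s where "s = (\<Sum>j\<in>T. (x j)^2)"
  define Mx where "Mx = (\<lambda>i. \<Sum>j\<in>T. M i j * x j)"
  have s0: "s \<ge> 0" unfolding s_def by (auto intro: sum_nonneg)
  have lhs: "(\<Sum>i\<in>T. \<Sum>j\<in>T. x i * M i j * x j) = (\<Sum>i\<in>T. x i * Mx i)"
    unfolding Mx_def by (simp add: sum_distrib_left mult_ac)
  show ?thesis
  proof (cases "s = 0")
    case True
    hence "\<forall>j\<in>T. x j = 0" using fin unfolding s_def by (simp add: sum_nonneg_eq_0_iff)
    thus ?thesis using True unfolding lhs s_def by simp
  next
    case False
    hence sp: "s > 0" using s0 by simp
    define y where "y = (\<lambda>j. x j / sqrt s)"
    have "(\<Sum>j\<in>T. (y j)^2) = 1" unfolding y_def using sp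
      by (simp add: power_divide sum_divide_distrib[symmetric] s_def[symmetric])
    hence "sqrt (\<Sum>i\<in>T. (\<Sum>j\<in>T. M i j * y j)\<^sup>2) \<le> lam"
      using opnorm_on_ge[OF fin, of y M] op by simp
    moreover have "(\<Sum>j\<in>T. M i j * y j) = Mx i / sqrt s" for i
      unfolding y_def Mx_def by (simp add: sum_divide_distrib)
    ultimately have "sqrt (\<Sum>i\<in>T. (Mx i / sqrt s)\<^sup>2) \<le> lam" by simp
    also have "(\<Sum>i\<in>T. (Mx i / sqrt s)\<^sup>2) = (\<Sum>i\<in>T. (Mx i)\<^sup>2) / s"
      using sp by (simp add: power_divide sum_divide_distrib)
    finally have "sqrt ((\<Sum>i\<in>T. (Mx i)\<^sup>2) / s) \<le> lam" .
    hence h2: "sqrt (\<Sum>i\<in>T. (Mx i)\<^sup>2) \<le> lam * sqrt s" using sp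
      by (simp add: real_sqrt_divide divide_le_eq)
    have h3: "sqrt s * sqrt (\<Sum>i\<in>T. (Mx i)\<^sup>2) \<le> sqrt s * (lam * sqrt s)"
      by (rule mult_left_mono[OF h2], simp add: s0)
    have "\<bar>\<Sum>i\<in>T. x i * Mx i\<bar> \<le> sqrt s * sqrt (\<Sum>i\<in>T. (Mx i)\<^sup>2)"
    proof -
      have "(\<Sum>i\<in>T. x i * Mx i)\<^sup>2 \<le> s * (\<Sum>i\<in>T. (Mx i)\<^sup>2)"
        unfolding s_def by (rule Cauchy_Schwarz_ineq_sum)
      hence "sqrt ((\<Sum>i\<in>T. x i * Mx i)\<^sup>2) \<le> sqrt (s * (\<Sum>i\<in>T. (Mx i)\<^sup>2))"
        by (rule real_sqrt_le_mono)
      thus ?thesis by (simp add: real_sqrt_mult)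
    qed
    hence "\<bar>\<Sum>i\<in>T. x i * Mx i\<bar> \<le> sqrt s * (lam * sqrt s)"
      using h3 by linarith
    also have "\<dots> = lam * s" using s0 by (simp add: mult_ac)
    finally show ?thesis unfolding lhs s_def .
  qed
qed

lemma bilin_supported:
  assumes T: "T \<subseteq> {..<n}" and x: "\<And>i. i \<notin> T \<Longrightarrow> x i = 0"
  shows "bilin n M x x = (\<Sum>i\<in>T. \<Sum>j\<in>T. x i * M i j * x j)"
    and "(\<Sum>i<n. (x i)^2) = (\<Sum>i\<in>T. (x i)^2)"
proof -
  have fin: "finite T" using T finite_subset by blast
  have "bilin n M x x = (\<Sum>i\<in>T. \<Sum>j<n. x i * M i j * x j)" unfolding bilin_def
    by (rule sum.mono_neutral_right, insert T x, auto)
  also have "\<dots> = (\<Sum>i\<in>T. \<Sum>j\<in>T. x i * M i j * x j)"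
    by (rule sum.cong[OF refl], rule sum.mono_neutral_right, insert T x, auto)
  finally show "bilin n M x x = (\<Sum>i\<in>T. \<Sum>j\<in>T. x i * M i j * x j)" .
  show "(\<Sum>i<n. (x i)^2) = (\<Sum>i\<in>T. (x i)^2)"
    by (rule sum.mono_neutral_right, insert T x, auto)
qed

lemma abs_bilin_le_opnorm_on:
  assumes T: "T \<subseteq> {..<n}" and op: "opnorm_on T M \<le> lam"
    and x: "\<And>i. i \<notin> T \<Longrightarrow> x i = 0"
  shows "\<bar>bilin n M x x\<bar> \<le> lam * (\<Sum>i<n. (x i)^2)"
proof -
  have fin: "finite T" using T finite_subset by blast
  show ?thesis using abs_quad_le_opnorm_on[OF fin op, of x] bilin_supported(1)[OF T x, where M=M] bilin_supported(2)[OF T x] by simp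
qed


section \<open>The spectral event of the stochastic block model\<close>

definition sbm_noise ::
  "nat \<Rightarrow> nat \<Rightarrow> (nat \<Rightarrow> nat set) \<Rightarrow> real \<Rightarrow> real \<Rightarrow> (nat \<Rightarrow> nat \<Rightarrow> real) \<Rightarrow> nat \<Rightarrow> nat \<Rightarrow> real" where
  "sbm_noise n k S a b A0 i j =
     A0 i j - (a + b) / (2 * real n) - (a - b) / (2 * real n) * (if same_comm k S i j then 1 else -1)"

definition spectrally_good ::
  "nat \<Rightarrow> nat \<Rightarrow> (nat \<Rightarrow> nat set) \<Rightarrow> real \<Rightarrow> real \<Rightarrow> real \<Rightarrow> (nat \<Rightarrow> nat \<Rightarrow> real) \<Rightarrow> bool" where
  "spectrally_good n k S a b chi A0 \<longleftrightarrow>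
     (\<exists>T \<subseteq> {..<n}. (1 - exp (-2 * (sqrt a - sqrt b)\<^sup>2)) * real n \<le> real (card T) \<and>
                   opnorm_on T (sbm_noise n k S a b A0) \<le> chi * sqrt (a + b))"

lemma prob_spectrally_good:
  assumes "chi_property chi" "is_partition n k S" "0 \<le> b" "b < a" "a \<le> real n"
  shows "1 - 2 / (real n)\<^sup>2 \<le> measure_pmf.prob (sbm n k S a b) {A0. spectrally_good n k S a b chi A0}"
  using assms unfolding chi_property_def spectrally_good_def sbm_noise_def[abs_def] Let_def
  by (elim allE[of _ n] allE[of _ k] allE[of _ S] allE[of _ a] allE[of _ b]) simp

lemma sbm_support:
  assumes "A0 \<in> set_pmf (sbm n k S a b)"
  shows "A0 i j = 0 \<or> A0 i j = 1" and "A0 i j = A0 j i" and "A0 i i = 0"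
proof -
  define I where "I = {(i, j). i < j \<and> j < n}"
  have "I \<subseteq> {..<n} \<times> {..<n}" unfolding I_def by auto
  hence I: "finite I" by (rule finite_subset) simp
  obtain e where A0: "A0 = edge_adj e" and e: "e \<in> set_pmf (Pi_pmf I False
      (\<lambda>(i, j). bernoulli_pmf (if same_comm k S i j then a / real n else b / real n)))"
    using assms unfolding sbm_def I_def by auto
  have "e x = False" if "x \<notin> I" for x
    using subsetD[OF set_Pi_pmf_subset[OF I] e] that by (cases x) simp
  thus "A0 i j = 0 \<or> A0 i j = 1" "A0 i j = A0 j i" "A0 i i = 0"
    unfolding A0 edge_adj_def by (auto simp: I_def)
qed

text \<open>Already for two vertices in one community with \<open>a = 2\<close>, \<open>b = 0\<close>, every diagonal entry of
  the noise is \<open>-1\<close>, so the spectral property forces \<open>\<chi> \<ge> 1/\<surd>2\<close>.\<close>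

lemma chi_property_ge:
  assumes "chi_property chi"
  shows "1 / sqrt 2 \<le> chi"
proof -
  define S :: "nat \<Rightarrow> nat set" where "S = (\<lambda>_. {0, 1})"
  have part: "is_partition 2 1 S" unfolding is_partition_def S_def by auto
  have "1 - 2 / (real 2)\<^sup>2 \<le> measure_pmf.prob (sbm 2 1 S 2 0) {A0. spectrally_good 2 1 S 2 0 chi A0}"
    by (rule prob_spectrally_good[OF assms part]) simp_all
  hence "measure_pmf.prob (sbm 2 1 S 2 0) {A0. spectrally_good 2 1 S 2 0 chi A0} \<noteq> 0" by simp
  then obtain A0 where A0: "A0 \<in> set_pmf (sbm 2 1 S 2 0)" and "spectrally_good 2 1 S 2 0 chi A0"
    unfolding measure_pmf_zero_iff by blast
  then obtain T where T: "T \<subseteq> {..<2}"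
    and card: "(1 - exp (-2 * (sqrt 2 - sqrt 0)\<^sup>2)) * real (2::nat) \<le> real (card T)"
    and op: "opnorm_on T (sbm_noise 2 1 S 2 0 A0) \<le> chi * sqrt (2 + 0)"
    unfolding spectrally_good_def by blast
  have "exp (-2 * (sqrt 2 - sqrt 0)\<^sup>2) < (1::real)" by simp
  hence "T \<noteq> {}" using card by auto
  then obtain i where i: "i \<in> T" by blast
  have "finite T" using T finite_subset by blast
  have "\<bar>sbm_noise 2 1 S 2 0 A0 i i\<bar> \<le> chi * sqrt (2 + 0)"
    using abs_diag_le_opnorm_on[OF \<open>finite T\<close> i] op by (rule order_trans)
  moreover have "same_comm 1 S i i" unfolding same_comm_def S_def using i T by auto
  ultimately have "1 \<le> chi * sqrt 2" using sbm_support(3)[OF A0, of i] by (simp add: sbm_noise_def)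
  thus ?thesis by (simp add: field_simps)
qed

lemma sum_pairs_filter:
  fixes W :: "nat \<Rightarrow> nat \<Rightarrow> real"
  shows "(\<Sum>(i, j) \<in> {(i, j). i < n \<and> j < n \<and> P i j}. W i j) = (\<Sum>i<n. \<Sum>j<n. if P i j then W i j else 0)"
proof -
  have "(\<Sum>(i, j) \<in> {(i, j). i < n \<and> j < n \<and> P i j}. W i j)
      = (\<Sum>(i, j) \<in> {..<n} \<times> {..<n}. if P i j then W i j else 0)"
    by (rule sum.mono_neutral_cong_left) (auto split: if_splits)
  also have "\<dots> = (\<Sum>i<n. \<Sum>j<n. if P i j then W i j else 0)"
    by (simp add: sum.cartesian_product)
  finally show ?thesis .
qed

lemma sqrt_add_div_diff_le:
  fixes a b :: real
  assumes b: "0 \<le> b" and ab: "b < a"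
  shows "sqrt (a + b) / (a - b) \<le> 1 / sqrt ((sqrt a - sqrt b)\<^sup>2)"
proof -
  have sab: "sqrt b < sqrt a" using ab b by simp
  have pos: "0 < sqrt a + sqrt b" using sab b by (smt (verit) real_sqrt_ge_zero)
  have diff: "a - b = (sqrt a - sqrt b) * (sqrt a + sqrt b)"
    using ab b by (simp add: algebra_simps)
  have "sqrt (a + b) / (a - b) \<le> (sqrt a + sqrt b) / (a - b)"
    using sqrt_add_le_add_sqrt[of a b] ab b by (intro divide_right_mono) auto
  also have "\<dots> = 1 / (sqrt a - sqrt b)" unfolding diff using pos by simp
  also have "\<dots> = 1 / sqrt ((sqrt a - sqrt b)\<^sup>2)" using sab by simp
  finally show ?thesis .
qed

lemma two_exp_le_div_sqrt:
  fixes C chi :: real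
  assumes chi: "1 / sqrt 2 \<le> chi" and C: "0 < C"
  shows "2 * exp (- 2 * C) \<le> chi / sqrt C"
proof -
  define s where "s = sqrt C"
  have s0: "s > 0" using C by (simp add: s_def)
  have Cs: "C = s^2" using C by (simp add: s_def)
  have e1: "exp C \<ge> 1 + C" by (rule exp_ge_add_one_self)
  have "exp (2 * C) = (exp C)^2" by (simp add: exp_double[symmetric] power2_eq_square exp_add[symmetric])
  also have "\<dots> \<ge> (1 + C)^2" using e1 C by (simp add: power_mono)
  finally have e2: "exp (2 * C) \<ge> (1 + C)^2" .
  have r2: "sqrt 2 * sqrt 2 = (2::real)" by simp
  have key: "2 * sqrt 2 * s \<le> (1 + C)^2"
  proof -
    have "0 \<le> (sqrt 2 * s - 1)^2" by simp
    hence "2 * sqrt 2 * s \<le> 1 + 2 * s^2" using r2 by (simp add: power2_eq_square algebra_simps)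
    also have "\<dots> \<le> (1 + s^2)^2"
    proof -
      have "(1 + s^2)^2 = 1 + 2 * s^2 + s^2 * s^2" by (simp add: power2_eq_square algebra_simps)
      moreover have "0 \<le> s^2 * s^2" by simp
      ultimately show ?thesis by linarith
    qed
    finally show ?thesis unfolding Cs .
  qed
  have "2 * exp (- 2 * C) = 2 / exp (2 * C)" by (simp add: exp_minus divide_inverse)
  also have "\<dots> \<le> 2 / (2 * sqrt 2 * s)"
    using key e2 s0 by (intro divide_left_mono, auto)
  also have "\<dots> = (1 / sqrt 2) / s" by simp
  also have "\<dots> \<le> chi / s" using divide_right_mono[OF chi, of s] s0 by simp
  finally show ?thesis unfolding s_def .
qed

lemma sum_partition_indicator_mult:
  assumes "is_partition n k S"
  shows "(\<Sum>l<k. (if i \<in> S l \<and> i \<in> R then 1 else 0) * (if j \<in> S l \<and> j \<in> R then 1 else 0))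
           = (if i \<in> R \<and> j \<in> R \<and> same_comm k S i j then 1 else (0::real))"
proof (cases "i \<in> R \<and> j \<in> R \<and> same_comm k S i j")
  case True
  then obtain l where l: "l < k" "i \<in> S l" "j \<in> S l" and ij: "i \<in> R" "j \<in> R"
    unfolding same_comm_def by blast
  have uniq: "l' = l" if "l' < k" "i \<in> S l'" for l'
  proof (rule ccontr)
    assume "l' \<noteq> l"
    hence "S l' \<inter> S l = {}" using assms that(1) l(1) unfolding is_partition_def by blast
    thus False using that(2) l(2) by blast
  qed
  have "(if i \<in> S l' \<and> i \<in> R then 1 else 0) * (if j \<in> S l' \<and> j \<in> R then 1 else 0)
      = (if l' = l then 1 else (0::real))" if "l' < k" for l'
  proof (cases "l' = l")
    case False
    hence "i \<notin> S l'" using uniq[OF that] by blast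
    thus ?thesis using False by simp
  qed (use l ij in simp)
  hence "(\<Sum>l'<k. (if i \<in> S l' \<and> i \<in> R then 1 else 0) * (if j \<in> S l' \<and> j \<in> R then 1 else 0))
      = (\<Sum>l'<k. if l' = l then 1 else (0::real))"
    by (intro sum.cong) simp_all
  thus ?thesis using True l by simp
next
  case False
  hence "(if i \<in> S l \<and> i \<in> R then 1 else 0) * (if j \<in> S l \<and> j \<in> R then 1 else 0) = (0::real)"
    if "l < k" for l
    using that unfolding same_comm_def by auto
  hence "(\<Sum>l<k. (if i \<in> S l \<and> i \<in> R then 1 else 0) * (if j \<in> S l \<and> j \<in> R then 1 else 0)) = (0::real)"
    by (meson lessThan_iff sum.neutral)
  thus ?thesis using False by simp
qed

lemma sum_same_comm:
  assumes "is_partition n k S"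
  shows "(\<Sum>i<n. \<Sum>j<n. if same_comm k S i j then 1 else 0) = (\<Sum>l<k. (real (card (S l)))\<^sup>2)"
proof -
  have "(\<Sum>i<n. \<Sum>j<n. if same_comm k S i j then 1 else 0)
      = (\<Sum>i<n. \<Sum>j<n. \<Sum>l<k. (if i \<in> S l then 1 else 0) * (if j \<in> S l then 1 else (0::real)))"
    using sum_partition_indicator_mult[OF assms, where R=UNIV] by simp
  also have "\<dots> = (\<Sum>i<n. \<Sum>l<k. \<Sum>j<n. (if i \<in> S l then 1 else 0) * (if j \<in> S l then 1 else (0::real)))"
    by (rule sum.cong[OF refl], rule sum.swap)
  also have "\<dots> = (\<Sum>l<k. \<Sum>i<n. \<Sum>j<n. (if i \<in> S l then 1 else 0) * (if j \<in> S l then 1 else (0::real)))"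
    by (rule sum.swap)
  also have "\<dots> = (\<Sum>l<k. (real (card (S l)))\<^sup>2)"
  proof (rule sum.cong[OF refl])
    fix l assume "l \<in> {..<k}"
    hence "S l \<subseteq> {..<n}" using assms unfolding is_partition_def by blast
    hence card: "(\<Sum>i<n. if i \<in> S l then 1 else 0) = real (card (S l))"
      by (simp add: sum.If_cases Int_absorb1)
    show "(\<Sum>i<n. \<Sum>j<n. (if i \<in> S l then 1 else 0) * (if j \<in> S l then 1 else (0::real)))
        = (real (card (S l)))\<^sup>2"
      by (simp only: card[symmetric] power2_eq_square sum_product)
  qed
  finally show ?thesis .
qed

section \<open>The planted solution of the initialization SDP\<close>

locale corrupted_sbm =
  fixes n k :: nat and S :: "nat \<Rightarrow> nat set" and a b eps chi :: real
    and A0 A A1 :: "nat \<Rightarrow> nat \<Rightarrow> real" and B T :: "nat set"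
  assumes partition: "is_partition n k S"
    and b_nonneg: "0 \<le> b" and b_less_a: "b < a" and a_le_n: "a \<le> real n"
    and chi_ge: "1 / sqrt 2 \<le> chi"
    and A0_01: "\<And>i j. A0 i j = 0 \<or> A0 i j = 1"
    and A0_sym: "\<And>i j. A0 i j = A0 j i"
    and A1_adjacency: "adjacency n A1"
    and A1_ge_A0: "\<And>i j. i < n \<Longrightarrow> j < n \<Longrightarrow> same_comm k S i j \<Longrightarrow> A0 i j \<le> A1 i j"
    and A1_le_A0: "\<And>i j. i < n \<Longrightarrow> j < n \<Longrightarrow> \<not> same_comm k S i j \<Longrightarrow> A1 i j \<le> A0 i j"
    and B_sub: "B \<subseteq> {..<n}" and card_B: "real (card B) \<le> eps * real n"
    and A_eq_A1: "\<And>i j. i < n \<Longrightarrow> j < n \<Longrightarrow> i \<notin> B \<Longrightarrow> j \<notin> B \<Longrightarrow> A i j = A1 i j"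
    and T_sub: "T \<subseteq> {..<n}"
    and card_T: "(1 - exp (-2 * (sqrt a - sqrt b)\<^sup>2)) * real n \<le> real (card T)"
    and opnorm_T: "opnorm_on T (sbm_noise n k S a b A0) \<le> chi * sqrt (a + b)"
begin

abbreviation noise :: "nat \<Rightarrow> nat \<Rightarrow> real" where
  "noise \<equiv> sbm_noise n k S a b A0"

definition radius :: real where
  "radius = chi * sqrt (a + b)"

definition clean :: "nat set" where
  "clean = T - B"

definition clean_ind :: "nat \<Rightarrow> real" where
  "clean_ind i = (if i \<in> clean then 1 else 0)"

definition comm_ind :: "nat \<Rightarrow> nat \<Rightarrow> real" where
  "comm_ind l i = (if i \<in> S l \<and> i \<in> clean then 1 else 0)"

definition W_planted :: "nat \<Rightarrow> nat \<Rightarrow> real" where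
  "W_planted i j = (if i \<in> clean \<and> j \<in> clean \<and> same_comm k S i j then 1 else 0)"

definition F_planted :: "nat \<Rightarrow> nat \<Rightarrow> real" where
  "F_planted i j = W_planted i j * (A1 i j - A0 i j)"

definition cross_clean :: "nat \<Rightarrow> nat \<Rightarrow> real" where
  "cross_clean i j = (if i \<in> clean \<and> j \<in> clean \<and> \<not> same_comm k S i j then 1 else 0)"

definition residual :: "(nat \<Rightarrow> nat \<Rightarrow> real) \<Rightarrow> (nat \<Rightarrow> nat \<Rightarrow> real) \<Rightarrow> nat \<Rightarrow> nat \<Rightarrow> real" where
  "residual W F i j = (A i j - a / real n - F i j) * W i j"

lemma n_pos: "0 < n"
  using a_le_n b_less_a b_nonneg by (cases n) auto

lemma chi_nonneg: "0 \<le> chi"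
proof -
  have "0 < 1 / sqrt (2::real)" by simp
  thus ?thesis using chi_ge by linarith
qed

lemma radius_nonneg: "0 \<le> radius"
  unfolding radius_def using chi_nonneg b_nonneg b_less_a by simp

lemma clean_sub: "clean \<subseteq> T" "clean \<subseteq> {..<n}"
  using T_sub by (auto simp: clean_def)

lemma same_comm_sym: "same_comm k S i j = same_comm k S j i"
  unfolding same_comm_def by auto

lemma sum_comm_ind_mult:
  "(\<Sum>l<k. comm_ind l i * comm_ind l j) = (if i \<in> clean \<and> j \<in> clean \<and> same_comm k S i j then 1 else 0)"
  unfolding comm_ind_def by (rule sum_partition_indicator_mult[OF partition])

lemma W_planted_blocks: "W_planted i j = (\<Sum>l<k. comm_ind l i * comm_ind l j)"
  unfolding W_planted_def sum_comm_ind_mult ..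

lemma W_planted_sym: "W_planted i j = W_planted j i"
  unfolding W_planted_def using same_comm_sym by auto

lemma cross_clean_eq: "cross_clean i j = clean_ind i * clean_ind j - W_planted i j"
  unfolding cross_clean_def clean_ind_def W_planted_def by auto

lemma comm_ind_idem: "comm_ind l i * comm_ind l i = comm_ind l i"
  by (simp add: comm_ind_def)

lemma sum_comm_ind_le: "(\<Sum>l<k. comm_ind l i) \<le> 1"
  using sum_comm_ind_mult[of i i] by (simp add: comm_ind_idem)

lemma sum_blocks_sq_le: "(\<Sum>l<k. \<Sum>i<n. (comm_ind l i * x i)^2) \<le> (\<Sum>i<n. (x i)^2)"
proof -
  have "(\<Sum>l<k. \<Sum>i<n. (comm_ind l i * x i)^2) = (\<Sum>i<n. (x i)^2 * (\<Sum>l<k. comm_ind l i))"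
    unfolding sum_distrib_left sum.swap[of _ "{..<k}"]
    by (intro sum.cong refl) (simp add: power_mult_distrib power2_eq_square comm_ind_idem mult_ac)
  also have "\<dots> \<le> (\<Sum>i<n. (x i)^2)"
    by (intro sum_mono mult_left_le sum_comm_ind_le) simp
  finally show ?thesis .
qed

lemma sum_clean_ind_sq_le: "(\<Sum>i<n. (clean_ind i * x i)^2) \<le> (\<Sum>i<n. (x i)^2)"
  by (rule sum_mono) (simp add: clean_ind_def power_mult_distrib)

lemma noise_sym: "noise i j = noise j i"
  unfolding sbm_noise_def using A0_sym[of i j] same_comm_sym[of i j] by simp

lemma noise_quad_bound:
  assumes "\<And>i. i \<notin> T \<Longrightarrow> x i = 0"
  shows "\<bar>bilin n noise x x\<bar> \<le> radius * (\<Sum>i<n. (x i)^2)"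
  unfolding radius_def by (rule abs_bilin_le_opnorm_on[OF T_sub opnorm_T assms])

lemma bilin_planted:
  "bilin n (\<lambda>i j. W_planted i j * M i j) x y
     = (\<Sum>l<k. bilin n M (\<lambda>i. comm_ind l i * x i) (\<lambda>i. comm_ind l i * y i))"
  unfolding W_planted_blocks by (rule bilin_blocks)

lemma planted_noise_quad_bound:
  "\<bar>bilin n (\<lambda>i j. W_planted i j * noise i j) x x\<bar> \<le> radius * (\<Sum>i<n. (x i)^2)"
proof -
  have "\<bar>bilin n (\<lambda>i j. W_planted i j * noise i j) x x\<bar>
      = \<bar>\<Sum>l<k. bilin n noise (\<lambda>i. comm_ind l i * x i) (\<lambda>i. comm_ind l i * x i)\<bar>"
    by (simp only: bilin_planted)
  also have "\<dots> \<le> (\<Sum>l<k. \<bar>bilin n noise (\<lambda>i. comm_ind l i * x i) (\<lambda>i. comm_ind l i * x i)\<bar>)"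
    by (rule sum_abs)
  also have "\<dots> \<le> (\<Sum>l<k. radius * (\<Sum>i<n. (comm_ind l i * x i)^2))"
    using clean_sub by (intro sum_mono noise_quad_bound) (auto simp: comm_ind_def)
  also have "\<dots> \<le> radius * (\<Sum>i<n. (x i)^2)"
    unfolding sum_distrib_left[symmetric] by (rule mult_left_mono[OF sum_blocks_sq_le radius_nonneg])
  finally show ?thesis .
qed

lemma residual_planted:
  assumes "i < n" "j < n"
  shows "residual W_planted F_planted i j = W_planted i j * noise i j"
proof (cases "i \<in> clean \<and> j \<in> clean \<and> same_comm k S i j")
  case True
  hence "A i j = A1 i j" using A_eq_A1 assms by (auto simp: clean_def)
  thus ?thesis using True n_pos
    by (simp add: residual_def F_planted_def W_planted_def sbm_noise_def field_simps)
next
  case False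
  hence "W_planted i j = 0" by (simp add: W_planted_def)
  thus ?thesis by (simp add: residual_def)
qed

lemma planted_feasible: "sdp_feasible n A a b chi W_planted F_planted"
proof -
  have entries: "0 \<le> W_planted i j \<and> W_planted i j \<le> 1 \<and> 0 \<le> F_planted i j \<and> F_planted i j \<le> 1"
    if "i < n" "j < n" for i j
  proof (cases "i \<in> clean \<and> j \<in> clean \<and> same_comm k S i j")
    case True
    have "A1 i j = 0 \<or> A1 i j = 1" using A1_adjacency unfolding adjacency_def by auto
    thus ?thesis using A0_01[of i j] A1_ge_A0[OF that] True
      by (auto simp: F_planted_def W_planted_def)
  next
    case False
    hence "W_planted i j = 0" by (simp add: W_planted_def)
    thus ?thesis by (simp add: F_planted_def)
  qed
  have "bilin n W_planted x x = (\<Sum>l<k. (\<Sum>i<n. comm_ind l i * x i)^2)" for x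
    using bilin_planted[of "\<lambda>_ _. 1" x x] bilin_ones by simp
  hence "trace_norm n W_planted = (\<Sum>i<n. W_planted i i)"
    by (intro trace_norm_psd_eq_trace W_planted_sym) (simp add: sum_nonneg)
  also have "\<dots> \<le> real n" using sum_mono[of "{..<n}" "\<lambda>i. W_planted i i" "\<lambda>_. 1"]
    by (simp add: W_planted_def)
  finally have trace: "trace_norm n W_planted \<le> real n" .
  have sym: "residual W_planted F_planted i j = residual W_planted F_planted j i" if "i < n" "j < n" for i j
    using that by (simp add: residual_planted W_planted_sym noise_sym)
  have "\<bar>bilin n (residual W_planted F_planted) x x\<bar> \<le> radius * (\<Sum>i<n. (x i)^2)" for x
    using planted_noise_quad_bound[of x] by (simp add: bilin_cong[OF residual_planted])
  note psd = psd_shifts_of_quad_bound[OF sym this]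
  show ?thesis
    using entries trace psd unfolding sdp_feasible_def Let_def residual_def radius_def by blast
qed

lemma feasible_quad_bound:
  assumes "sdp_feasible n A a b chi W F"
  shows "\<bar>bilin n (residual W F) x x\<bar> \<le> radius * (\<Sum>i<n. (x i)^2)"
proof -
  from assms have "psd n (\<lambda>i j. residual W F i j + (if i = j then radius else 0))"
    and "psd n (\<lambda>i j. (if i = j then radius else 0) - residual W F i j)"
    unfolding sdp_feasible_def Let_def residual_def radius_def by auto
  thus ?thesis by (rule quad_bound_of_psd_shifts)
qed

lemma cross_clean_residual_ge:
  assumes "sdp_feasible n A a b chi W F"
  shows "- 2 * radius * real n \<le> (\<Sum>i<n. \<Sum>j<n. cross_clean i j * residual W F i j)"
proof -
  note bound = feasible_quad_bound[OF assms]
  have "(\<Sum>i<n. \<Sum>j<n. cross_clean i j * residual W F i j)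
      = bilin n (residual W F) clean_ind clean_ind - bilin n (\<lambda>i j. W_planted i j * residual W F i j) (\<lambda>_. 1) (\<lambda>_. 1)"
    unfolding cross_clean_eq bilin_def by (simp add: sum_subtractf[symmetric] algebra_simps)
  hence "(\<Sum>i<n. \<Sum>j<n. cross_clean i j * residual W F i j)
      = bilin n (residual W F) clean_ind clean_ind
        - (\<Sum>l<k. bilin n (residual W F) (\<lambda>i. comm_ind l i * 1) (\<lambda>i. comm_ind l i * 1))"
    unfolding bilin_planted .
  moreover have "- radius * real n \<le> bilin n (residual W F) clean_ind clean_ind"
    using bound[of clean_ind] sum_clean_ind_sq_le[of "\<lambda>_. 1"]
      mult_left_mono[OF _ radius_nonneg, of "\<Sum>i<n. (clean_ind i)^2" "real n"] by simp
  moreover have "(\<Sum>l<k. bilin n (residual W F) (\<lambda>i. comm_ind l i * 1) (\<lambda>i. comm_ind l i * 1))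
      \<le> (\<Sum>l<k. radius * (\<Sum>i<n. (comm_ind l i * 1)^2))"
    using bound by (intro sum_mono) (simp add: abs_le_iff)
  moreover have "(\<Sum>l<k. radius * (\<Sum>i<n. (comm_ind l i * 1)^2)) \<le> radius * real n"
    unfolding sum_distrib_left[symmetric]
    using mult_left_mono[OF sum_blocks_sq_le[of "\<lambda>_. 1"] radius_nonneg] by simp
  ultimately show ?thesis by linarith
qed

lemma cross_clean_residual_le:
  assumes "sdp_feasible n A a b chi W F" and ij: "i < n" "j < n"
  shows "cross_clean i j * residual W F i j \<le> cross_clean i j * (noise i j - (a - b) / real n) * W i j"
proof (cases "i \<in> clean \<and> j \<in> clean \<and> \<not> same_comm k S i j")
  case True
  have WF: "0 \<le> W i j" "0 \<le> F i j" using assms unfolding sdp_feasible_def by auto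
  have "A i j = A1 i j" using A_eq_A1 ij True by (auto simp: clean_def)
  hence "A i j - a / real n - F i j \<le> A0 i j - a / real n" using A1_le_A0[OF ij] True WF by simp
  also have "A0 i j - a / real n = noise i j - (a - b) / real n"
    using True n_pos by (simp add: sbm_noise_def field_simps)
  finally have "A i j - a / real n - F i j \<le> noise i j - (a - b) / real n" .
  thus ?thesis using True WF by (simp add: cross_clean_def residual_def mult_right_mono)
next
  case False
  hence "cross_clean i j = 0" by (simp add: cross_clean_def)
  thus ?thesis by simp
qed

lemma cross_clean_noise_le:
  assumes "sdp_feasible n A a b chi W F"
  shows "(\<Sum>i<n. \<Sum>j<n. cross_clean i j * noise i j * W i j) \<le> 2 * radius * real n"
proof -
  have sym: "cross_clean i j * noise i j = cross_clean j i * noise j i" for i j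
    unfolding cross_clean_def using noise_sym[of i j] same_comm_sym[of i j] by auto
  have bound: "\<bar>bilin n (\<lambda>i j. cross_clean i j * noise i j) x x\<bar> \<le> 2 * radius * (\<Sum>i<n. (x i)^2)" for x
  proof -
    have "bilin n (\<lambda>i j. cross_clean i j * noise i j) x x
        = bilin n noise (\<lambda>i. clean_ind i * x i) (\<lambda>i. clean_ind i * x i)
          - bilin n (\<lambda>i j. W_planted i j * noise i j) x x"
      unfolding bilin_mask[symmetric] bilin_diff_left[symmetric] cross_clean_eq
      by (simp add: algebra_simps)
    moreover have "\<bar>bilin n noise (\<lambda>i. clean_ind i * x i) (\<lambda>i. clean_ind i * x i)\<bar>
        \<le> radius * (\<Sum>i<n. (x i)^2)"
      using noise_quad_bound[of "\<lambda>i. clean_ind i * x i"] clean_sub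
        mult_left_mono[OF sum_clean_ind_sq_le radius_nonneg, of x]
      by (force simp: clean_ind_def)
    ultimately show ?thesis using planted_noise_quad_bound[of x] by linarith
  qed
  have "(\<Sum>i<n. \<Sum>j<n. cross_clean i j * noise i j * W i j) \<le> 2 * radius * trace_norm n W"
    by (rule sum_mult_le_trace_norm[OF sym bound]) (simp add: radius_nonneg)
  also have "\<dots> \<le> 2 * radius * real n"
    using assms radius_nonneg unfolding sdp_feasible_def by (simp add: mult_left_mono)
  finally show ?thesis .
qed

lemma cross_clean_mass_le:
  assumes "sdp_feasible n A a b chi W F"
  shows "(a - b) / real n * (\<Sum>i<n. \<Sum>j<n. cross_clean i j * W i j) \<le> 4 * radius * real n"
proof -
  have "(a - b) / real n * (\<Sum>i<n. \<Sum>j<n. cross_clean i j * W i j)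
      = (\<Sum>i<n. \<Sum>j<n. cross_clean i j * noise i j * W i j)
        - (\<Sum>i<n. \<Sum>j<n. cross_clean i j * (noise i j - (a - b) / real n) * W i j)"
    by (simp add: sum_distrib_left sum_subtractf[symmetric] algebra_simps)
  also have "\<dots> \<le> 2 * radius * real n + 2 * radius * real n"
  proof -
    have "(\<Sum>i<n. \<Sum>j<n. cross_clean i j * residual W F i j)
        \<le> (\<Sum>i<n. \<Sum>j<n. cross_clean i j * (noise i j - (a - b) / real n) * W i j)"
      using cross_clean_residual_le[OF assms] by (intro sum_mono) auto
    thus ?thesis using cross_clean_noise_le[OF assms] cross_clean_residual_ge[OF assms] by linarith
  qed
  finally show ?thesis by (simp add: algebra_simps)
qed

lemma card_clean_le: "real (card clean) \<le> real n"
  using card_mono[OF _ clean_sub(2)] by simp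

lemma card_clean_ge:
  "(1 - exp (-2 * (sqrt a - sqrt b)\<^sup>2)) * real n - eps * real n \<le> real (card clean)"
proof -
  have "finite B" using B_sub finite_subset by blast
  have "T \<subseteq> clean \<union> B" unfolding clean_def by auto
  hence "card T \<le> card (clean \<union> B)"
    using \<open>finite B\<close> clean_sub(2) finite_subset by (intro card_mono) auto
  also have "\<dots> \<le> card clean + card B" by (rule card_Un_le)
  finally show ?thesis using card_T card_B by linarith
qed

lemma missing_pairs_le:
  "(real n)\<^sup>2 - (real (card clean))\<^sup>2 \<le> 2 * (real n)\<^sup>2 * (exp (-2 * (sqrt a - sqrt b)\<^sup>2) + eps)"
proof -
  let ?e = "exp (-2 * (sqrt a - sqrt b)\<^sup>2)" and ?t = "real (card clean)"
  have "(real n)\<^sup>2 - ?t\<^sup>2 = (real n - ?t) * (real n + ?t)" by (simp add: power2_eq_square algebra_simps)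
  also have "\<dots> \<le> (real n - ?t) * (2 * real n)"
    using card_clean_le by (intro mult_left_mono) auto
  also have "\<dots> \<le> ((?e + eps) * real n) * (2 * real n)"
    using card_clean_ge by (intro mult_right_mono) (auto simp: algebra_simps)
  finally show ?thesis by (simp add: power2_eq_square algebra_simps)
qed

lemma sum_not_clean_pairs:
  "(\<Sum>i<n. \<Sum>j<n. 1 - clean_ind i * clean_ind j) = (real n)\<^sup>2 - (real (card clean))\<^sup>2"
proof -
  have card: "(\<Sum>i<n. clean_ind i) = real (card clean)"
    unfolding clean_ind_def using clean_sub(2) by (simp add: sum.If_cases Int_absorb1)
  have "(\<Sum>i<n. \<Sum>j<n. clean_ind i * clean_ind j) = (real (card clean))\<^sup>2"
    by (simp only: card[symmetric] power2_eq_square sum_product)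
  thus ?thesis by (simp add: sum_subtractf power2_eq_square)
qed

lemma planted_objective_ge:
  "(\<Sum>l<k. (real (card (S l)))\<^sup>2) - ((real n)\<^sup>2 - (real (card clean))\<^sup>2) \<le> sdp_obj n W_planted"
proof -
  have "(\<Sum>l<k. (real (card (S l)))\<^sup>2) - ((real n)\<^sup>2 - (real (card clean))\<^sup>2)
      = (\<Sum>i<n. \<Sum>j<n. (if same_comm k S i j then 1 else 0) - (1 - clean_ind i * clean_ind j))"
    unfolding sum_same_comm[OF partition, symmetric] sum_not_clean_pairs[symmetric]
    by (simp add: sum_subtractf)
  also have "\<dots> \<le> sdp_obj n W_planted"
    unfolding sdp_obj_def by (intro sum_mono) (auto simp: W_planted_def clean_ind_def)
  finally show ?thesis .
qed

lemma cross_community_mass_le: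
  assumes "sdp_feasible n A a b chi W F"
  shows "(\<Sum>i<n. \<Sum>j<n. if same_comm k S i j then 0 else W i j)
           \<le> (\<Sum>i<n. \<Sum>j<n. cross_clean i j * W i j) + ((real n)\<^sup>2 - (real (card clean))\<^sup>2)"
proof -
  have "(\<Sum>i<n. \<Sum>j<n. if same_comm k S i j then 0 else W i j)
      \<le> (\<Sum>i<n. \<Sum>j<n. cross_clean i j * W i j + (1 - clean_ind i * clean_ind j))"
    using assms unfolding sdp_feasible_def
    by (intro sum_mono) (auto simp: cross_clean_def clean_ind_def)
  thus ?thesis unfolding sum_not_clean_pairs[symmetric] by (simp add: sum.distrib)
qed

lemma cross_clean_mass_bound:
  assumes "sdp_feasible n A a b chi W F"
  shows "(\<Sum>i<n. \<Sum>j<n. cross_clean i j * W i j) \<le> 4 * (chi / sqrt ((sqrt a - sqrt b)\<^sup>2)) * (real n)\<^sup>2"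
proof -
  have "(\<Sum>i<n. \<Sum>j<n. cross_clean i j * W i j) \<le> 4 * (radius / (a - b)) * (real n)\<^sup>2"
    using cross_clean_mass_le[OF assms] n_pos b_less_a by (simp add: field_simps power2_eq_square)
  also have "\<dots> \<le> 4 * (chi / sqrt ((sqrt a - sqrt b)\<^sup>2)) * (real n)\<^sup>2"
  proof -
    have "radius / (a - b) \<le> chi / sqrt ((sqrt a - sqrt b)\<^sup>2)"
      using mult_left_mono[OF sqrt_add_div_diff_le[OF b_nonneg b_less_a] chi_nonneg]
      by (simp add: radius_def)
    thus ?thesis by (intro mult_right_mono) simp_all
  qed
  finally show ?thesis .
qed

lemma optimal_sdp_bounds:
  assumes opt: "sdp_optimal n A a b chi W F"
  shows "(\<Sum>(i, j) \<in> {(i, j). i < n \<and> j < n \<and> \<not> same_comm k S i j}. W i j)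
           \<le> (5 * chi / sqrt ((sqrt a - sqrt b)\<^sup>2) + 2 * eps) * (real n)\<^sup>2"
    and "(\<Sum>(i, j) \<in> {(i, j). i < n \<and> j < n \<and> same_comm k S i j}. W i j)
           \<ge> (\<Sum>l<k. (real (card (S l)))\<^sup>2) - (6 * chi / sqrt ((sqrt a - sqrt b)\<^sup>2) + 4 * eps) * (real n)\<^sup>2"
proof -
  define C where "C = (sqrt a - sqrt b)\<^sup>2"
  define K where "K = chi / sqrt C * (real n)\<^sup>2"
  define E where "E = exp (-2 * C) * (real n)\<^sup>2"
  define P where "P = eps * (real n)\<^sup>2"
  define cross_mass where "cross_mass = (\<Sum>i<n. \<Sum>j<n. if same_comm k S i j then 0 else W i j)"
  define same_mass where "same_mass = (\<Sum>i<n. \<Sum>j<n. if same_comm k S i j then W i j else 0)"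
  have feasible: "sdp_feasible n A a b chi W F" using opt unfolding sdp_optimal_def by blast
  have "0 < C" unfolding C_def using b_nonneg b_less_a by simp
  hence exp_le: "2 * E \<le> K"
    using mult_right_mono[OF two_exp_le_div_sqrt[OF chi_ge], of C "(real n)\<^sup>2"]
    unfolding E_def K_def by simp
  have missing: "(real n)\<^sup>2 - (real (card clean))\<^sup>2 \<le> 2 * E + 2 * P"
    using missing_pairs_le unfolding E_def P_def C_def by (simp add: algebra_simps)
  have cross_le: "cross_mass \<le> 4 * K + ((real n)\<^sup>2 - (real (card clean))\<^sup>2)"
    using cross_community_mass_le[OF feasible] cross_clean_mass_bound[OF feasible]
    unfolding cross_mass_def K_def C_def by simp
  have obj: "sdp_obj n W = same_mass + cross_mass"
    unfolding sdp_obj_def same_mass_def cross_mass_def sum.distrib[symmetric] by (intro sum.cong refl) simp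
  have "sdp_obj n W_planted \<le> sdp_obj n W"
    using opt planted_feasible unfolding sdp_optimal_def by blast
  hence "same_mass \<ge> (\<Sum>l<k. (real (card (S l)))\<^sup>2) - (6 * K + 4 * P)"
    using planted_objective_ge obj cross_le missing exp_le by linarith
  moreover have "cross_mass \<le> 5 * K + 2 * P" using cross_le missing exp_le by linarith
  moreover have "5 * K + 2 * P = (5 * chi / sqrt C + 2 * eps) * (real n)\<^sup>2"
    and "6 * K + 4 * P = (6 * chi / sqrt C + 4 * eps) * (real n)\<^sup>2"
    unfolding K_def P_def by (simp_all add: algebra_simps)
  moreover have "(\<Sum>(i, j) \<in> {(i, j). i < n \<and> j < n \<and> \<not> same_comm k S i j}. W i j) = cross_mass"
    unfolding sum_pairs_filter cross_mass_def by (intro sum.cong refl) auto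
  moreover have "(\<Sum>(i, j) \<in> {(i, j). i < n \<and> j < n \<and> same_comm k S i j}. W i j) = same_mass"
    unfolding sum_pairs_filter same_mass_def ..
  ultimately show "(\<Sum>(i, j) \<in> {(i, j). i < n \<and> j < n \<and> \<not> same_comm k S i j}. W i j)
           \<le> (5 * chi / sqrt ((sqrt a - sqrt b)\<^sup>2) + 2 * eps) * (real n)\<^sup>2"
    and "(\<Sum>(i, j) \<in> {(i, j). i < n \<and> j < n \<and> same_comm k S i j}. W i j)
           \<ge> (\<Sum>l<k. (real (card (S l)))\<^sup>2) - (6 * chi / sqrt ((sqrt a - sqrt b)\<^sup>2) + 4 * eps) * (real n)\<^sup>2"
    unfolding C_def by simp_all
qed

end


lemma measure_pmf_prob_mono_on_support:
  assumes "\<And>x. x \<in> set_pmf p \<Longrightarrow> P x \<Longrightarrow> Q x"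
  shows "measure_pmf.prob p {x. P x} \<le> measure_pmf.prob p {x. Q x}"
  using assms by (intro measure_pmf.finite_measure_mono_AE) (auto simp: AE_measure_pmf_iff)

lemma sdp_bounds_of_spectrally_good:
  assumes chi: "1 / sqrt 2 \<le> chi" and part: "is_partition n k S"
    and ab: "0 \<le> b" "b < a" "a \<le> real n"
    and A0: "A0 \<in> set_pmf (sbm n k S a b)" and good: "spectrally_good n k S a b chi A0"
    and adm: "admissible n k S eps A0 A" and opt: "sdp_optimal n A a b chi W F"
  shows "let C = (sqrt a - sqrt b)\<^sup>2 in
           (\<Sum>(i, j) \<in> {(i, j). i < n \<and> j < n \<and> \<not> same_comm k S i j}. W i j)
             \<le> (5 * chi / sqrt C + 2 * eps) * (real n)\<^sup>2 \<and>
           (\<Sum>(i, j) \<in> {(i, j). i < n \<and> j < n \<and> same_comm k S i j}. W i j)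
             \<ge> (\<Sum>l<k. (real (card (S l)))\<^sup>2) - (6 * chi / sqrt C + 4 * eps) * (real n)\<^sup>2"
proof -
  obtain T where T: "T \<subseteq> {..<n}" "(1 - exp (-2 * (sqrt a - sqrt b)\<^sup>2)) * real n \<le> real (card T)"
    "opnorm_on T (sbm_noise n k S a b A0) \<le> chi * sqrt (a + b)"
    using good unfolding spectrally_good_def by blast
  obtain A1 B where A1: "adjacency n A1"
    "\<forall>i<n. \<forall>j<n. (same_comm k S i j \<longrightarrow> A1 i j \<ge> A0 i j) \<and> (\<not> same_comm k S i j \<longrightarrow> A1 i j \<le> A0 i j)"
    and B: "B \<subseteq> {..<n}" "real (card B) \<le> eps * real n"
    "\<forall>i<n. \<forall>j<n. i \<notin> B \<and> j \<notin> B \<longrightarrow> A i j = A1 i j"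
    using adm unfolding admissible_def by blast
  interpret corrupted_sbm n k S a b eps chi A0 A A1 B T
  proof
    show "\<And>i j. A0 i j = 0 \<or> A0 i j = 1" "\<And>i j. A0 i j = A0 j i"
      using sbm_support[OF A0] by blast+
  qed (use chi part ab T A1 B in auto)
  show ?thesis unfolding Let_def using optimal_sdp_bounds[OF opt] by blast
qed

theorem mainTheorem10:
  fixes n k :: nat and S :: "nat \<Rightarrow> nat set" and a b eps chi :: real
  assumes "chi_property chi"
    and "is_partition n k S"
    and "0 \<le> b" and "b < a" and "a \<le> real n"
  shows "measure_pmf.prob (sbm n k S a b)
           {A0. \<forall>A. admissible n k S eps A0 A \<longrightarrow>
              (\<forall>W F. sdp_optimal n A a b chi W F \<longrightarrow>
                 (let C = (sqrt a - sqrt b)\<^sup>2 in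
                  (\<Sum>(i, j) \<in> {(i, j). i < n \<and> j < n \<and> \<not> same_comm k S i j}. W i j)
                     \<le> (5 * chi / sqrt C + 2 * eps) * (real n)\<^sup>2 \<and>
                  (\<Sum>(i, j) \<in> {(i, j). i < n \<and> j < n \<and> same_comm k S i j}. W i j)
                     \<ge> (\<Sum>l<k. (real (card (S l)))\<^sup>2) - (6 * chi / sqrt C + 4 * eps) * (real n)\<^sup>2))}
         \<ge> 1 - 2 / (real n)\<^sup>2"
proof (rule order_trans[OF prob_spectrally_good[OF assms] measure_pmf_prob_mono_on_support])
qed (use sdp_bounds_of_spectrally_good[OF chi_property_ge[OF assms(1)] assms(2-5)] in blast)

end
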